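(* Let $m\ge 7$ and $n\ge 1$ be integers, and let $f$ be an extendable knight's tour on $\mathcal{M}_{m-4,n}$ based at $(0,0)$. If $f$ is nullhomotopic, then for every integer $k\ge 0$ there exists a nullhomotopic knight's tour on $\mathcal{M}_{m+4k,n}$. If $f$ is generating, then for every integer $k\ge 0$ there exists a generating knight's tour on $\mathcal{M}_{m+4k,n}$.
   Context: For a positive integer $k$, let $\mathcal{S}_k$ be the graph with vertex set $\{(a,b)\in\mathbb{Z}^2: 0\le a<k\}$, where $(a,b),(a',b')$ are adjacent iff $\{|a-a'|,|b-b'|\}=\{1,2\}$. For $n\ge1$, $\sigma_k(a,b)=(k-1-a,\,b+n)$ generates a free $\mathbb{Z}$-action on $\mathcal{S}_k$, and $\mathcal{M}_{k,n}=\mathcal{S}_k/\langle\sigma_k\rangle$ (vertices and edges are orbits; multiple edges/loops allowed) is the knight's multigraph of the $k\times n$ Möbius strip board, with covering map $\phi_M:\mathcal{S}_k\to\mathcal{M}_{k,n}$. A knight's tour is a closed walk visiting every vertex exactly once apart from the repeated start/end vertex (a Hamiltonian cycle). For a tour based at $(0,0)$, take its unique lift to $\mathcal{S}_k$ starting at $(0,0)$; the tour is nullhomotopic if the lift ends at $(0,0)$ and generating if it ends at $(k-1,n)$ or $(k-1,-n)$. Let $\iota:\mathcal{S}_{m-4}\to\mathcal{S}_m$, $\iota(a,b)=(a+2,b)$. A left edge of $\mathcal{S}_m$ joins a vertex with first coordinate $2$ to one with first coordinate $3$; a right edge joins a vertex with first coordinate $m-4$ to one with first coordinate $m-3$; the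 second coordinates of the endpoints differ by $2$, and the edge is even or odd according to their parity. A collection of left and right edges is extending if: for $n$ even, it consists of exactly four edges, two even and two odd; for $n$ odd, it consists of exactly two edges, one left even or right odd and the other left odd or right even. An edge is traversed upward by a walk if the second coordinate increases along the traversal, downward otherwise. A knight's tour $f$ on $\mathcal{M}_{m-4,n}$ based at $(0,0)$ with lift $\tilde f$ to $\mathcal{S}_{m-4}$ starting at $(0,0)$ is extendable if $\iota\circ\tilde f$ traverses every edge of some extending collection of edges of $\mathcal{S}_m$, exactly half of them upward and half downward. *)

theory Defs
  imports Main
begin

type_synonym vtx = "int \<times> int"

definition in_strip :: "nat \<Rightarrow> vtx \<Rightarrow> bool" where
  "in_strip k p \<longleftrightarrow> 0 \<le> fst p \<and> fst p < int k"

definition knight_adj :: "vtx \<Rightarrow> vtx \<Rightarrow> bool" where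
  "knight_adj p q \<longleftrightarrow>
     {\<bar>fst p - fst q\<bar>, \<bar>snd p - snd q\<bar>} = {1, 2}"

definition sigma :: "nat \<Rightarrow> nat \<Rightarrow> vtx \<Rightarrow> vtx" where
  "sigma k n p = (int k - 1 - fst p, snd p + int n)"

definition sigma_pow :: "nat \<Rightarrow> nat \<Rightarrow> int \<Rightarrow> vtx \<Rightarrow> vtx" where
  "sigma_pow k n j p =
     (if even j then (fst p, snd p + j * int n)
      else (int k - 1 - fst p, snd p + j * int n))"

text \<open>Two vertices of S_k lie in the same orbit (= same vertex of M_{k,n}).\<close>
definition same_orbit :: "nat \<Rightarrow> nat \<Rightarrow> vtx \<Rightarrow> vtx \<Rightarrow> bool" where
  "same_orbit k n p q \<longleftrightarrow> (\<exists>j::int. q = sigma_pow k n j p)"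

text \<open>A knight's tour on M_{k,n} based at (0,0), represented by its unique lift
  to S_k starting at (0,0): the list w = [p_0, ..., p_N] of lifted vertices.\<close>
definition tour_lift :: "nat \<Rightarrow> nat \<Rightarrow> vtx list \<Rightarrow> bool" where
  "tour_lift k n w \<longleftrightarrow>
     2 \<le> length w \<and> w ! 0 = (0, 0) \<and>
     (\<forall>i < length w. in_strip k (w ! i)) \<and>
     (\<forall>i. Suc i < length w \<longrightarrow> knight_adj (w ! i) (w ! Suc i)) \<and>
     (\<forall>i j. i < j \<and> j < length w - 1 \<longrightarrow> \<not> same_orbit k n (w ! i) (w ! j)) \<and>
     (\<forall>v. in_strip k v \<longrightarrow> (\<exists>i < length w - 1. same_orbit k n v (w ! i))) \<and>
     same_orbit k n (w ! 0) (last w)"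

definition nullhomotopic :: "nat \<Rightarrow> nat \<Rightarrow> vtx list \<Rightarrow> bool" where
  "nullhomotopic k n w \<longleftrightarrow> last w = (0, 0)"

definition generating :: "nat \<Rightarrow> nat \<Rightarrow> vtx list \<Rightarrow> bool" where
  "generating k n w \<longleftrightarrow> last w = (int k - 1, int n) \<or> last w = (int k - 1, - int n)"

definition iota :: "vtx \<Rightarrow> vtx" where
  "iota p = (fst p + 2, snd p)"

definition left_edge :: "vtx set \<Rightarrow> bool" where
  "left_edge e \<longleftrightarrow> (\<exists>b b'. e = {(2, b), (3, b')} \<and> \<bar>b - b'\<bar> = 2)"

definition right_edge :: "nat \<Rightarrow> vtx set \<Rightarrow> bool" where
  "right_edge m e \<longleftrightarrow>
     (\<exists>b b'. e = {(int m - 4, b), (int m - 3, b')} \<and> \<bar>b - b'\<bar> = 2)"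

definition even_edge :: "vtx set \<Rightarrow> bool" where
  "even_edge e \<longleftrightarrow> (\<forall>p \<in> e. even (snd p))"

definition odd_edge :: "vtx set \<Rightarrow> bool" where
  "odd_edge e \<longleftrightarrow> (\<forall>p \<in> e. odd (snd p))"

definition extending :: "nat \<Rightarrow> nat \<Rightarrow> vtx set set \<Rightarrow> bool" where
  "extending m n C \<longleftrightarrow>
     (\<forall>e \<in> C. left_edge e \<or> right_edge m e) \<and> finite C \<and>
     (if even n then
        card C = 4 \<and> card {e \<in> C. even_edge e} = 2 \<and> card {e \<in> C. odd_edge e} = 2
      else
        (\<exists>e1 e2. C = {e1, e2} \<and> e1 \<noteq> e2 \<and>
           ((left_edge e1 \<and> even_edge e1) \<or> (right_edge m e1 \<and> odd_edge e1)) \<and>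
           ((left_edge e2 \<and> odd_edge e2) \<or> (right_edge m e2 \<and> even_edge e2))))"

definition traverses_up :: "vtx list \<Rightarrow> vtx set \<Rightarrow> bool" where
  "traverses_up u e \<longleftrightarrow>
     (\<exists>i. Suc i < length u \<and> e = {u ! i, u ! Suc i} \<and> snd (u ! i) < snd (u ! Suc i))"

definition traverses_down :: "vtx list \<Rightarrow> vtx set \<Rightarrow> bool" where
  "traverses_down u e \<longleftrightarrow>
     (\<exists>i. Suc i < length u \<and> e = {u ! i, u ! Suc i} \<and> snd (u ! Suc i) < snd (u ! i))"

definition traverses :: "vtx list \<Rightarrow> vtx set \<Rightarrow> bool" where
  "traverses u e \<longleftrightarrow> (\<exists>i. Suc i < length u \<and> e = {u ! i, u ! Suc i})"

definition extendable :: "nat \<Rightarrow> nat \<Rightarrow> vtx list \<Rightarrow> bool" where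
  "extendable m n w \<longleftrightarrow>
     tour_lift (m - 4) n w \<and>
     (\<exists>C. extending m n C \<and>
        (\<forall>e \<in> C. traverses (map iota w) e) \<and>
        card {e \<in> C. traverses_up (map iota w) e} = card C div 2 \<and>
        card {e \<in> C. traverses_down (map iota w) e} = card C div 2)"

end

theory Submission
  imports Defs "HOL-Library.Multiset"
begin

(* Widening the board by two columns on each side (the embedding iota) leaves a band of 4n new
   vertices of M_{m+4,n}: a cylinder of two columns and height 2n. Knight zigzags in it preserve a
   class (row - 2 column mod 4 for even n, row mod 2 for odd n); there are 4 classes of size n,
   resp. 2 classes of size 2n. At each edge of an extending collection the tour is rerouted
   through a zigzag detour covering one class; the signs of the detours can be chosen so that every
   class is covered exactly once. A detour ends one winding (two for odd n) further along the
   cylinder, so the rest of the lifted tour is moved by a deck transformation; since half of the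
   edges are traversed upward and half downward these transformations cancel and the homotopy
   class of the tour is preserved. Finally, the first step of each detour is again a left or right
   edge of the wider board, with opposite direction and row parity, so the new tour is extendable
   and the construction iterates. *)

section \<open>Orbits and lifted Hamiltonian cycles\<close>

lemma knight_adj_iff:
  "knight_adj p q \<longleftrightarrow>
    (\<bar>fst p - fst q\<bar> = 1 \<and> \<bar>snd p - snd q\<bar> = 2) \<or> (\<bar>fst p - fst q\<bar> = 2 \<and> \<bar>snd p - snd q\<bar> = 1)"
  unfolding knight_adj_def by (auto simp: doubleton_eq_iff)

lemma sigma_pow_0[simp]: "sigma_pow K n 0 p = p"
  by (simp add: sigma_pow_def)

lemma sigma_pow_add: "sigma_pow K n i (sigma_pow K n j p) = sigma_pow K n (i + j) p"
  by (auto simp: sigma_pow_def algebra_simps)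

lemma sigma_pow_even: "even j \<Longrightarrow> sigma_pow K n j p = (fst p, snd p + j * int n)"
  by (simp add: sigma_pow_def)

lemma in_strip_sigma_pow: "in_strip K p \<Longrightarrow> in_strip K (sigma_pow K n j p)"
  by (auto simp: in_strip_def sigma_pow_def)

lemma knight_adj_sigma_pow:
  "knight_adj (sigma_pow K n j p) (sigma_pow K n j q) \<longleftrightarrow> knight_adj p q"
  unfolding knight_adj_iff sigma_pow_def
  by (simp add: abs_minus_commute algebra_simps)


definition orbit_rep :: "nat \<Rightarrow> nat \<Rightarrow> vtx \<Rightarrow> vtx" where
  "orbit_rep K n p = (if even (snd p div int n) then fst p else int K - 1 - fst p, snd p mod int n)"

lemma orbit_rep_sigma_pow:
  assumes "1 \<le> n" shows "orbit_rep K n (sigma_pow K n j p) = orbit_rep K n p"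
proof -
  obtain a b where p: "p = (a, b)" by (cases p)
  have d: "(b + j * int n) div int n = b div int n + j" using assms by simp
  have md: "(b + j * int n) mod int n = b mod int n" by simp
  have e: "even (b div int n + j) \<longleftrightarrow> (even (b div int n) \<longleftrightarrow> even j)" by simp
  show ?thesis
  proof (cases "even j")
    case True
    then show ?thesis unfolding orbit_rep_def sigma_pow_def p using d md e by simp
  next
    case False
    then show ?thesis unfolding orbit_rep_def sigma_pow_def p using d md e by simp
  qed
qed

lemma orbit_rep_eq_imp_sigma_pow:
  assumes "1 \<le> n" and "orbit_rep K n p = orbit_rep K n q"
  shows "q = sigma_pow K n (snd q div int n - snd p div int n) p"
proof -
  obtain a b where p: "p = (a, b)" by (cases p)
  obtain a' b' where q: "q = (a', b')" by (cases q)
  have r: "b mod int n = b' mod int n" using assms(2) by (simp add: orbit_rep_def p q)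
  have row: "b + (b' div int n - b div int n) * int n = b'"
  proof -
    have h1: "b = b div int n * int n + b mod int n" by simp
    have h2: "b' = b' div int n * int n + b' mod int n" by simp
    have h3: "(b' div int n - b div int n) * int n = b' div int n * int n - b div int n * int n"
      by (simp add: left_diff_distrib)
    show ?thesis using h1 h2 h3 r by linarith
  qed
  have c: "(if even (b div int n) then a else int K - 1 - a)
         = (if even (b' div int n) then a' else int K - 1 - a')"
    using assms(2) unfolding orbit_rep_def p q prod.inject fst_conv snd_conv by blast
  have e: "even (b' div int n - b div int n) \<longleftrightarrow> (even (b div int n) \<longleftrightarrow> even (b' div int n))"
    by auto
  show ?thesis
    unfolding sigma_pow_def p q fst_conv snd_conv using row c e
    by (auto split: if_splits)
qed

lemma same_orbit_iff_orbit_rep: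
  assumes "1 \<le> n" shows "same_orbit K n p q \<longleftrightarrow> orbit_rep K n p = orbit_rep K n q"
proof
  assume "same_orbit K n p q" then obtain j where "q = sigma_pow K n j p"
    unfolding same_orbit_def by blast
  then show "orbit_rep K n p = orbit_rep K n q" using orbit_rep_sigma_pow[OF assms] by simp
next
  assume "orbit_rep K n p = orbit_rep K n q"
  then show "same_orbit K n p q"
    unfolding same_orbit_def using orbit_rep_eq_imp_sigma_pow[OF assms] by blast
qed

text \<open>Unlike \<^const>\<open>tour_lift\<close>, this describes the lift of a Hamiltonian cycle from an
  arbitrary start vertex, closing up after the deck transformation \<open>\<sigma>\<^sup>c\<close>; the notion is
  invariant under rotating the cycle and under deck transformations.\<close>
definition ham_lift :: "nat \<Rightarrow> nat \<Rightarrow> int \<Rightarrow> vtx list \<Rightarrow> bool" where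
  "ham_lift K n c w \<longleftrightarrow> 2 \<le> length w \<and> (\<forall>x\<in>set w. in_strip K x) \<and> successively knight_adj w \<and>
     distinct (map (orbit_rep K n) (butlast w)) \<and> last w = sigma_pow K n c (hd w) \<and>
     (\<forall>v. in_strip K v \<longrightarrow> orbit_rep K n v \<in> orbit_rep K n ` set (butlast w))"

lemma distinct_map_conv_nth_less:
  "distinct (map f xs) \<longleftrightarrow> (\<forall>i j. i < j \<and> j < length xs \<longrightarrow> f (xs ! i) \<noteq> f (xs ! j))"
  unfolding distinct_conv_nth by (auto, metis linorder_neqE_nat)

lemma bex_set_butlast_conv_nth:
  "(\<exists>x\<in>set (butlast xs). P x) \<longleftrightarrow> (\<exists>i < length xs - 1. P (xs ! i))"
  by (metis in_set_conv_nth length_butlast nth_butlast)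

lemma tour_lift_iff_ham_lift:
  assumes "1 \<le> n"
  shows "tour_lift K n w \<longleftrightarrow> (\<exists>c. ham_lift K n c w) \<and> hd w = (0, 0)"
proof (cases "2 \<le> length w")
  case True
  have hd: "w ! 0 = hd w"
    using True by (cases w) auto
  have strip: "(\<forall>i < length w. in_strip K (w ! i)) \<longleftrightarrow> (\<forall>x\<in>set w. in_strip K x)"
    by (metis in_set_conv_nth)
  have adj: "(\<forall>i. Suc i < length w \<longrightarrow> knight_adj (w ! i) (w ! Suc i)) \<longleftrightarrow> successively knight_adj w"
    by (simp add: successively_conv_nth)
  have dist: "(\<forall>i j. i < j \<and> j < length w - 1 \<longrightarrow> \<not> same_orbit K n (w ! i) (w ! j))
      \<longleftrightarrow> distinct (map (orbit_rep K n) (butlast w))"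
    by (simp add: distinct_map_conv_nth_less same_orbit_iff_orbit_rep[OF assms] nth_butlast)
  have cover: "(\<exists>i < length w - 1. same_orbit K n v (w ! i))
      \<longleftrightarrow> orbit_rep K n v \<in> orbit_rep K n ` set (butlast w)" for v
    using bex_set_butlast_conv_nth[of w "\<lambda>x. orbit_rep K n v = orbit_rep K n x"]
    by (auto simp: same_orbit_iff_orbit_rep[OF assms])
  have closes: "same_orbit K n (hd w) (last w) \<longleftrightarrow> (\<exists>c. last w = sigma_pow K n c (hd w))"
    by (simp add: same_orbit_def)
  show ?thesis
    unfolding tour_lift_def ham_lift_def
    by (simp only: hd strip adj dist cover closes True simp_thms) blast
next
  case False
  then show ?thesis
    by (simp add: tour_lift_def ham_lift_def)
qed

definition rotate_lift :: "nat \<Rightarrow> nat \<Rightarrow> int \<Rightarrow> vtx list \<Rightarrow> vtx list" where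
  "rotate_lift K n c w = tl w @ [sigma_pow K n c (w ! 1)]"

lemma ham_lift_rotate_lift:
  assumes n: "1 \<le> n" and ham: "ham_lift K n c w"
  shows "ham_lift K n c (rotate_lift K n c w)"
proof -
  obtain x y rest where w: "w = x # y # rest"
    using ham unfolding ham_lift_def by (metis Suc_le_length_iff numeral_2_eq_2)
  have lst: "last w = sigma_pow K n c x" using ham w by (simp add: ham_lift_def)
  have r: "rotate_lift K n c w = y # rest @ [sigma_pow K n c y]" by (simp add: rotate_lift_def w)
  have strip: "\<forall>z\<in>set w. in_strip K z" using ham by (simp add: ham_lift_def)
  have succ: "successively knight_adj w" using ham by (simp add: ham_lift_def)
  have adjxy: "knight_adj x y" using succ w by simp
  have s1: "successively knight_adj (y # rest)" using succ w by simp
  have lyr: "last (y # rest) = sigma_pow K n c x" using lst w by simp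
  have s2: "successively knight_adj (rotate_lift K n c w)"
  proof -
    have "rotate_lift K n c w = (y # rest) @ [sigma_pow K n c y]" using r by simp
    moreover have "knight_adj (last (y # rest)) (hd [sigma_pow K n c y])"
      using lyr adjxy knight_adj_sigma_pow by simp
    ultimately show ?thesis using s1 by (simp only: successively_append_iff) simp
  qed
  have strip2: "\<forall>z\<in>set (rotate_lift K n c w). in_strip K z"
    using strip in_strip_sigma_pow w unfolding r by auto
  have bl: "butlast w = x # butlast (y # rest)" by (simp add: w)
  have bl2: "butlast (rotate_lift K n c w) = butlast (y # rest) @ [last (y # rest)]"
    unfolding r by simp
  have ol: "orbit_rep K n (last (y # rest)) = orbit_rep K n x"
    using lyr orbit_rep_sigma_pow[OF n] by simp
  have m2: "map (orbit_rep K n) (butlast (rotate_lift K n c w)) = map (orbit_rep K n) (butlast (y # rest)) @ [orbit_rep K n x]"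
    using bl2 ol by simp
  have m1: "map (orbit_rep K n) (butlast w) = orbit_rep K n x # map (orbit_rep K n) (butlast (y # rest))"
    using bl by simp
  have d1: "distinct (map (orbit_rep K n) (butlast w))" using ham by (simp add: ham_lift_def)
  have d2: "distinct (map (orbit_rep K n) (butlast (rotate_lift K n c w)))"
    using d1 unfolding m1 m2 by auto
  have se: "orbit_rep K n ` set (butlast (rotate_lift K n c w)) = orbit_rep K n ` set (butlast w)"
    using m1 m2 by (metis list.set_map set_rotate1 rotate1.simps(2))
  have cov: "\<forall>v. in_strip K v \<longrightarrow> orbit_rep K n v \<in> orbit_rep K n ` set (butlast (rotate_lift K n c w))"
    using ham se by (simp add: ham_lift_def)
  have len: "2 \<le> length (rotate_lift K n c w)" using r by simp
  have last2: "last (rotate_lift K n c w) = sigma_pow K n c (hd (rotate_lift K n c w))"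
    using r by simp
  show ?thesis unfolding ham_lift_def using len strip2 s2 d2 last2 cov by blast
qed

lemma ham_lift_rotate_to:
  assumes n: "1 \<le> n"
  shows "ham_lift K n c w \<Longrightarrow> s < length w - 1 \<Longrightarrow> \<exists>w'. ham_lift K n c w' \<and> hd w' = w ! s"
proof (induction s arbitrary: w)
  case 0
  then show ?case by (metis ham_lift_def hd_conv_nth list.size(3) not_numeral_le_zero)
next
  case (Suc s)
  have c1: "ham_lift K n c (rotate_lift K n c w)" using ham_lift_rotate_lift[OF n Suc.prems(1)] .
  have l: "length (rotate_lift K n c w) = length w" using Suc.prems(1)
    by (cases w) (auto simp: rotate_lift_def ham_lift_def)
  obtain w' where "ham_lift K n c w'" "hd w' = rotate_lift K n c w ! s"
    using Suc.IH[OF c1] Suc.prems(2) l by auto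
  moreover have "rotate_lift K n c w ! s = w ! Suc s"
    using Suc.prems(2) by (simp add: rotate_lift_def nth_append nth_tl)
  ultimately show ?case by auto
qed

lemma ham_lift_map_sigma_pow:
  assumes n: "1 \<le> n" and ham: "ham_lift K n c w"
  shows "ham_lift K n c (map (sigma_pow K n j) w)"
proof -
  have ne: "w \<noteq> []" using ham by (auto simp: ham_lift_def)
  have "map (orbit_rep K n) (butlast (map (sigma_pow K n j) w)) = map (orbit_rep K n) (butlast w)"
    by (simp add: map_butlast[symmetric] orbit_rep_sigma_pow[OF n])
  moreover have "orbit_rep K n ` set (butlast (map (sigma_pow K n j) w)) = orbit_rep K n ` set (butlast w)"
    by (metis calculation list.set_map)
  moreover have "last (map (sigma_pow K n j) w) = sigma_pow K n c (hd (map (sigma_pow K n j) w))"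
    using ham ne by (simp add: ham_lift_def last_map hd_map sigma_pow_add add.commute)
  moreover have "successively knight_adj (map (sigma_pow K n j) w)"
    using ham by (simp add: ham_lift_def successively_map knight_adj_sigma_pow)
  ultimately show ?thesis using ham in_strip_sigma_pow unfolding ham_lift_def by auto
qed

lemma tour_lift_of_ham_lift:
  assumes n: "1 \<le> n" and K: "1 \<le> K" and ham: "ham_lift K n c w"
  shows "\<exists>w'. tour_lift K n w' \<and> last w' = sigma_pow K n c (0,0)"
proof -
  have "in_strip K (0,0)" using K by (simp add: in_strip_def)
  then have "orbit_rep K n (0,0) \<in> orbit_rep K n ` set (butlast w)"
    using ham by (simp add: ham_lift_def)
  then obtain x where x: "x \<in> set (butlast w)" and o: "orbit_rep K n (0,0) = orbit_rep K n x"
    by auto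
  obtain s where s: "s < length (butlast w)" and xs: "x = butlast w ! s"
    using x by (metis in_set_conv_nth)
  have xw: "x = w ! s" using s xs by (simp add: nth_butlast)
  obtain t where t: "x = sigma_pow K n t (0,0)" using orbit_rep_eq_imp_sigma_pow[OF n o] by blast
  obtain w1 where w1: "ham_lift K n c w1" "hd w1 = x"
    using ham_lift_rotate_to[OF n ham] s xw by auto
  define w2 where "w2 = map (sigma_pow K n (- t)) w1"
  have c2: "ham_lift K n c w2" unfolding w2_def using ham_lift_map_sigma_pow[OF n w1(1)] .
  have ne: "w1 \<noteq> []" using w1 by (auto simp: ham_lift_def)
  have h2: "hd w2 = (0,0)" unfolding w2_def using ne w1(2) t by (simp add: hd_map sigma_pow_add)
  have "tour_lift K n w2" using tour_lift_iff_ham_lift[OF n] c2 h2 by blast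
  moreover have "last w2 = sigma_pow K n c (0,0)" using c2 h2 by (simp add: ham_lift_def)
  ultimately show ?thesis by blast
qed

section \<open>Splicing detours into a walk\<close>

text \<open>After the \<open>i\<close>-th vertex the detour \<open>P i\<close> is inserted, and the rest of the walk is
  moved by \<open>\<sigma>\<^bsup>J i\<^esup>\<close>, so that a detour may end next to a translate of the next vertex.\<close>
fun splice :: "nat \<Rightarrow> nat \<Rightarrow> (nat \<Rightarrow> vtx list) \<Rightarrow> (nat \<Rightarrow> int) \<Rightarrow> nat \<Rightarrow> int \<Rightarrow> vtx list \<Rightarrow> vtx list" where
  "splice m n P J i s [] = []"
| "splice m n P J i s (x # xs) =
     sigma_pow m n s x # map (sigma_pow m n s) (P i) @ splice m n P J (Suc i) (s + J i) xs"

definition detours :: "(nat \<Rightarrow> vtx list) \<Rightarrow> nat \<Rightarrow> nat \<Rightarrow> vtx list" where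
  "detours P i k = concat (map P [i..<i + k])"

lemma detours_Suc: "detours P i (Suc k) = P i @ detours P (Suc i) k"
  unfolding detours_def by (simp add: upt_rec)

lemma detours_0 [simp]: "detours P i 0 = []"
  by (simp add: detours_def)

lemma splice_snoc:
  "P (i + length xs) = [] \<Longrightarrow>
   splice m n P J i s (xs @ [y]) = splice m n P J i s xs @ [sigma_pow m n (s + sum J {i..<i + length xs}) y]"
proof (induction xs arbitrary: i s)
  case Nil
  then show ?case by simp
next
  case (Cons x xs)
  have "P (Suc i + length xs) = []" using Cons.prems by simp
  note IH = Cons.IH[OF this]
  have "sum J {i..<i + length (x # xs)} = J i + sum J {Suc i..<Suc i + length xs}"
    by (simp add: sum.atLeast_Suc_lessThan)
  then show ?case by (simp add: IH algebra_simps)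
qed

lemma length_splice: "length (splice m n P J i s xs) = length xs + length (detours P i (length xs))"
  by (induction xs arbitrary: i s) (auto simp: detours_Suc)

lemma mset_map_splice:
  assumes f: "\<And>j x. f (sigma_pow m n j x) = f x"
  shows "mset (map f (splice m n P J i s xs)) = mset (map f xs) + mset (map f (detours P i (length xs)))"
proof (induction xs arbitrary: i s)
  case Nil
  then show ?case by simp
next
  case (Cons x xs)
  have "map f (splice m n P J i s (x # xs)) = f x # map f (P i) @ map f (splice m n P J (Suc i) (s + J i) xs)"
    by (simp add: f)
  moreover have fc: "f \<circ> sigma_pow m n s = f" by (rule ext) (simp add: f)
  moreover note IH = Cons.IH[of "Suc i" "s + J i", simplified]
  ultimately show ?case by (simp add: detours_Suc fc)
qed

lemma set_splice:
  "z \<in> set (splice m n P J i s xs) \<Longrightarrow>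
   \<exists>j y. z = sigma_pow m n j y \<and> (y \<in> set xs \<or> y \<in> set (detours P i (length xs)))"
proof (induction xs arbitrary: i s)
  case Nil
  then show ?case by simp
next
  case (Cons x xs)
  from Cons.prems consider "z = sigma_pow m n s x" | "z \<in> sigma_pow m n s ` set (P i)"
    | "z \<in> set (splice m n P J (Suc i) (s + J i) xs)" by auto
  then show ?case
  proof cases
    case 1 then show ?thesis by (metis list.set_intros(1))
  next
    case 2 then show ?thesis by (auto simp: detours_Suc)
  next
    case 3
    from Cons.IH[OF 3] show ?thesis by (auto simp: detours_Suc)
  qed
qed

lemma hd_splice: "xs \<noteq> [] \<Longrightarrow> hd (splice m n P J i s xs) = sigma_pow m n s (hd xs)"
  by (cases xs) auto

lemma successively_splice:
  assumes "successively knight_adj xs"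
    and "\<And>k. k < length xs \<Longrightarrow> P (i + k) = [] \<Longrightarrow> J (i + k) = 0"
    and "\<And>k. k < length xs \<Longrightarrow> P (i + k) \<noteq> [] \<Longrightarrow> Suc k < length xs \<and>
            knight_adj (xs ! k) (hd (P (i + k))) \<and> successively knight_adj (P (i + k)) \<and>
            knight_adj (last (P (i + k))) (sigma_pow m n (J (i + k)) (xs ! Suc k))"
  shows "successively knight_adj (splice m n P J i s xs)"
  using assms
proof (induction xs arbitrary: i s)
  case Nil
  then show ?case by simp
next
  case (Cons x xs)
  have s1: "successively knight_adj xs"
    using Cons.prems(1) by (metis successively.simps(1) successively_Cons)
  have IH: "successively knight_adj (splice m n P J (Suc i) s' xs)" for s'
    apply (rule Cons.IH[OF s1])
    using Cons.prems(2)[of "Suc k" for k] Cons.prems(3)[of "Suc k" for k] by auto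
  show ?case
  proof (cases xs)
    case Nil
    have "P i = []" using Cons.prems(3)[of 0] Nil by auto
    then show ?thesis using Nil by simp
  next
    case (Cons y ys)
    have hdE: "hd (splice m n P J (Suc i) s' xs) = sigma_pow m n s' y" for s'
      using Cons by simp
    have neE: "splice m n P J (Suc i) s' xs \<noteq> []" for s' using Cons by simp
    have axy: "knight_adj x y" using Cons.prems(1) Cons by simp
    show ?thesis
    proof (cases "P i = []")
      case True
      have "J i = 0" using Cons.prems(2)[of 0] True by simp
      then show ?thesis using True IH[of s] hdE[of s] neE[of s] axy knight_adj_sigma_pow
        by (simp add: successively_Cons)
    next
      case False
      have c: "knight_adj x (hd (P i))" "successively knight_adj (P i)"
        "knight_adj (last (P i)) (sigma_pow m n (J i) y)"
        using Cons.prems(3)[of 0] False Cons by auto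
      have a1: "knight_adj (sigma_pow m n s x) (hd (map (sigma_pow m n s) (P i)))"
        using c(1) False knight_adj_sigma_pow by (simp add: hd_map)
      have a2: "successively knight_adj (map (sigma_pow m n s) (P i))"
        using c(2) by (simp add: successively_map knight_adj_sigma_pow)
      have a3: "knight_adj (last (map (sigma_pow m n s) (P i))) (hd (splice m n P J (Suc i) (s + J i) xs))"
      proof -
        have "sigma_pow m n (s + J i) y = sigma_pow m n s (sigma_pow m n (J i) y)"
          by (simp add: sigma_pow_add)
        then show ?thesis using c(3) False hdE knight_adj_sigma_pow by (simp add: last_map)
      qed
      have "successively knight_adj (map (sigma_pow m n s) (P i) @ splice m n P J (Suc i) (s + J i) xs)"
        using a2 a3 IH False by (simp add: successively_append_iff)
      then show ?thesis using a1 False by (simp add: successively_Cons)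
    qed
  qed
qed

lemma splice_detour_start:
  assumes "k < length xs" and "2 \<le> length (P (i + k))" and "even s" and "\<And>t. even (J t)"
  shows "\<exists>pos s'. even s' \<and> Suc pos < length (splice m n P J i s xs) \<and>
     splice m n P J i s xs ! pos = sigma_pow m n s' (P (i + k) ! 0) \<and>
     splice m n P J i s xs ! Suc pos = sigma_pow m n s' (P (i + k) ! 1)"
  using assms
proof (induction xs arbitrary: i s k)
  case Nil
  then show ?case by simp
next
  case (Cons x xs)
  show ?case
  proof (cases k)
    case 0
    obtain a b rest where "P i = a # b # rest" using Cons.prems(2) 0
      by (metis One_nat_def Suc_1 Suc_le_length_iff add_0_right)
    then show ?thesis using Cons.prems(3) 0 by (intro exI[of _ 1] exI[of _ s]) simp
  next
    case (Suc k')
    have e: "even (s + J i)" using Cons.prems(3,4) by simp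
    obtain pos s' where p: "even s'" "Suc pos < length (splice m n P J (Suc i) (s + J i) xs)"
      "splice m n P J (Suc i) (s + J i) xs ! pos = sigma_pow m n s' (P (Suc i + k') ! 0)"
      "splice m n P J (Suc i) (s + J i) xs ! Suc pos = sigma_pow m n s' (P (Suc i + k') ! 1)"
      using Cons.IH[of k' "Suc i" "s + J i"] Cons.prems Suc e by auto
    define A where "A = sigma_pow m n s x # map (sigma_pow m n s) (P i)"
    define E where "E = splice m n P J (Suc i) (s + J i) xs"
    have eqA: "splice m n P J i s (x # xs) = A @ E" by (simp add: A_def E_def)
    have eq: "splice m n P J i s (x # xs) ! (length A + q) = E ! q" for q
      unfolding eqA by (rule nth_append_length_plus)
    have lenE: "length (splice m n P J i s (x # xs)) = length A + length E" unfolding eqA by simp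
    show ?thesis
      apply (rule exI[of _ "length A + pos"], rule exI[of _ s'])
      using p eq[of pos] eq[of "Suc pos"] lenE Suc unfolding E_def[symmetric] by simp
  qed
qed

section \<open>The band and its zigzag detours\<close>

text \<open>Coordinates on the band cylinder of height \<open>2n\<close>: the column alternates between \<open>c0\<close>
  and \<open>1 - c0\<close> while the row advances by \<open>2d\<close>.\<close>
definition zigzag :: "nat \<Rightarrow> int \<Rightarrow> int \<Rightarrow> int \<Rightarrow> nat \<Rightarrow> int \<times> int" where
  "zigzag n c0 \<rho> d k = (if even k then c0 else 1 - c0, (\<rho> + 2 * d * int k) mod (2 * int n))"

text \<open>The size of a class of band vertices.\<close>
definition detour_len :: "nat \<Rightarrow> nat" where
  "detour_len n = (if even n then n else 2 * n)"

lemma four_dvd_zigzag_class_diff: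
  assumes d: "d = 1 \<or> d = -1"
  shows "(4::int) dvd (\<rho> + 2 * d * int k - 2 * (if even k then c0 else 1 - c0)) - (\<rho> - 2 * c0)"
proof (cases "even k")
  case True
  then obtain t where "k = 2 * t"
    by blast
  then have "\<rho> + 2 * d * int k - 2 * (if even k then c0 else 1 - c0) - (\<rho> - 2 * c0) = 4 * (d * int t)"
    by (simp add: algebra_simps)
  then show ?thesis
    by (metis dvd_triv_left)
next
  case False
  then obtain t where k: "k = 2 * t + 1"
    by (metis oddE)
  then have "\<rho> + 2 * d * int k - 2 * (if even k then c0 else 1 - c0) - (\<rho> - 2 * c0)
      = 4 * (if d = 1 then int t + c0 else c0 - int t - 1)"
    using d by (auto simp: algebra_simps)
  then show ?thesis
    by (metis dvd_triv_left)
qed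

lemma zigzag_class_even:
  assumes n: "even n" and d: "d = 1 \<or> d = -1"
  shows "(snd (zigzag n c0 \<rho> d k) - 2 * fst (zigzag n c0 \<rho> d k)) mod 4 = (\<rho> - 2 * c0) mod 4"
proof -
  define col where "col = (if even k then c0 else 1 - c0)"
  have dv: "(4::int) dvd 2 * int n"
    using n by (auto elim: evenE)
  have "(snd (zigzag n c0 \<rho> d k) - 2 * fst (zigzag n c0 \<rho> d k)) mod 4
      = ((\<rho> + 2 * d * int k) mod (2 * int n) - 2 * col) mod 4"
    by (simp add: zigzag_def col_def)
  also have "\<dots> = ((\<rho> + 2 * d * int k) mod (2 * int n) mod 4 - 2 * col) mod 4"
    by (simp add: mod_diff_left_eq)
  also have "\<dots> = ((\<rho> + 2 * d * int k) mod 4 - 2 * col) mod 4"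
    using dv by (simp add: mod_mod_cancel)
  also have "\<dots> = ((\<rho> + 2 * d * int k) - 2 * col) mod 4"
    by (simp add: mod_diff_left_eq)
  also have "\<dots> = (\<rho> - 2 * c0) mod 4"
    using four_dvd_zigzag_class_diff[OF d, of \<rho> k c0] by (simp add: col_def mod_eq_dvd_iff)
  finally show ?thesis .
qed

lemma zigzag_class_odd:
  shows "snd (zigzag n c0 \<rho> d k) mod 2 = \<rho> mod 2"
proof -
  have "snd (zigzag n c0 \<rho> d k) mod 2 = (\<rho> + 2 * d * int k) mod (2 * int n) mod 2"
    by (simp add: zigzag_def)
  also have "\<dots> = (\<rho> + 2 * d * int k) mod 2"
    by (rule mod_mod_cancel) simp
  also have "\<dots> = \<rho> mod 2"
  proof -
    have "\<rho> + 2 * d * int k = \<rho> + 2 * (d * int k)" by simp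
    then show ?thesis by (metis mod_mult_self2 mult.commute)
  qed
  finally show ?thesis .
qed

lemma dvd_abs_less_imp_eq_0:
  assumes "(n::int) dvd x" "\<bar>x\<bar> < n" shows "x = 0"
proof (rule ccontr)
  assume "x \<noteq> 0"
  then have "\<bar>n\<bar> \<le> \<bar>x\<bar>" using assms(1) by (rule dvd_imp_le_int)
  then show False using assms(2) by linarith
qed

lemma zigzag_inj:
  assumes n: "1 \<le> n" and d: "d = 1 \<or> d = -1" and c0: "c0 = 0 \<or> c0 = 1"
    and k: "k < detour_len n" and k': "k' < detour_len n" and eq: "zigzag n c0 \<rho> d k = zigzag n c0 \<rho> d k'"
  shows "k = k'"
proof -
  have par: "even k \<longleftrightarrow> even k'"
    using c0 eq by (elim disjE) (auto simp: zigzag_def split: if_splits)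
  have "(\<rho> + 2 * d * int k) mod (2 * int n) = (\<rho> + 2 * d * int k') mod (2 * int n)"
    using eq by (simp add: zigzag_def)
  then have "2 * int n dvd (\<rho> + 2 * d * int k) - (\<rho> + 2 * d * int k')"
    by (simp add: mod_eq_dvd_iff)
  then have "2 * int n dvd 2 * (d * (int k - int k'))" by (simp add: algebra_simps)
  then have "int n dvd d * (int k - int k')" by (simp add: mult_dvd_mono)
  then have "int n dvd d * (d * (int k - int k'))" by simp
  moreover have "d * (d * (int k - int k')) = int k - int k'" using d by auto
  ultimately have nd: "int n dvd int k - int k'" by simp
  show ?thesis
  proof (cases "even n")
    case True
    then have "\<bar>int k - int k'\<bar> < int n" using k k' by (simp add: detour_len_def)
    then show ?thesis using dvd_abs_less_imp_eq_0[OF nd] by simp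
  next
    case False
    obtain y where y: "int k - int k' = int n * y" using nd by (auto simp: dvd_def)
    have "even (int k - int k')" using par by simp
    then have "even (int n * y)" using y by simp
    then have "even y" using False by simp
    then obtain z where "y = 2 * z" by auto
    then have "2 * int n dvd int k - int k'" using y by (simp add: algebra_simps)
    moreover have "\<bar>int k - int k'\<bar> < 2 * int n" using k k' False by (simp add: detour_len_def)
    ultimately show ?thesis using dvd_abs_less_imp_eq_0 by fastforce
  qed
qed

lemma zigzag_row_surj:
  assumes n: "1 \<le> n" and d: "d = 1 \<or> d = -1" and r: "0 \<le> r" "r < 2 * int n"
    and e: "even (r - \<rho>)"
  shows "\<exists>k < n. (\<rho> + 2 * d * int k) mod (2 * int n) = r"
proof -
  define t where "t = (r - \<rho>) div 2"
  have rt: "r = \<rho> + 2 * t" using e by (simp add: t_def)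
  define k where "k = nat ((d * t) mod int n)"
  have k0: "int k = (d * t) mod int n" using n by (simp add: k_def)
  have "(d * t) mod int n < int n" using n by simp
  then have kn: "k < n" using k0 by linarith
  have "int n dvd int k - d * t" using k0 by (simp add: mod_eq_dvd_iff[symmetric] mod_mod_trivial)
  then have "2 * int n dvd 2 * (int k - d * t)" by (rule mult_dvd_mono[OF dvd_refl])
  then have "2 * int n dvd d * (2 * (int k - d * t))" by simp
  moreover have "d * (2 * (int k - d * t)) = (\<rho> + 2 * d * int k) - r"
    using d rt by (auto simp: algebra_simps)
  ultimately have "(\<rho> + 2 * d * int k) mod (2 * int n) = r mod (2 * int n)"
    by (simp add: mod_eq_dvd_iff)
  also have "\<dots> = r" using r by simp
  finally show ?thesis using kn by blast
qed

lemma zigzag_surj: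
  assumes n: "1 \<le> n" and d: "d = 1 \<or> d = -1" and c0: "c0 = 0 \<or> c0 = 1"
    and c: "c = 0 \<or> c = 1" and r: "0 \<le> r" "r < 2 * int n"
    and same_class: "if even n then (r - 2 * c) mod 4 = (\<rho> - 2 * c0) mod 4 else r mod 2 = \<rho> mod 2"
  shows "\<exists>k < detour_len n. zigzag n c0 \<rho> d k = (c, r)"
proof -
  have e: "even (r - \<rho>)"
  proof (cases "even n")
    case True
    then have "(r - 2 * c) mod 4 = (\<rho> - 2 * c0) mod 4" using same_class by simp
    then have "(4::int) dvd (r - 2 * c) - (\<rho> - 2 * c0)" by (simp add: mod_eq_dvd_iff)
    then have "(2::int) dvd (r - 2 * c) - (\<rho> - 2 * c0)" by (rule dvd_trans[rotated]) simp
    then show ?thesis by (simp add: algebra_simps)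
  next
    case False
    then have "r mod 2 = \<rho> mod 2" using same_class by simp
    then show ?thesis by (simp add: mod_eq_dvd_iff)
  qed
  obtain k where k: "k < n" and row: "(\<rho> + 2 * d * int k) mod (2 * int n) = r"
    using zigzag_row_surj[OF n d r e] by blast
  show ?thesis
  proof (cases "even n")
    case True
    have "(snd (zigzag n c0 \<rho> d k) - 2 * fst (zigzag n c0 \<rho> d k)) mod 4 = (\<rho> - 2 * c0) mod 4"
      using zigzag_class_even[OF True d] .
    then have "(r - 2 * fst (zigzag n c0 \<rho> d k)) mod 4 = (r - 2 * c) mod 4"
      using same_class True row by (simp add: zigzag_def)
    then have "(4::int) dvd 2 * c - 2 * fst (zigzag n c0 \<rho> d k)"
      by (simp add: mod_eq_dvd_iff algebra_simps)
    moreover have "fst (zigzag n c0 \<rho> d k) = 0 \<or> fst (zigzag n c0 \<rho> d k) = 1"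
      using c0 by (auto simp: zigzag_def)
    ultimately have "fst (zigzag n c0 \<rho> d k) = c" using c by auto
    then have "zigzag n c0 \<rho> d k = (c, r)" using row by (simp add: zigzag_def prod_eq_iff)
    moreover have "k < detour_len n" using k True by (simp add: detour_len_def)
    ultimately show ?thesis by blast
  next
    case False
    have row2: "(\<rho> + 2 * d * int (k + n)) mod (2 * int n) = r"
    proof -
      have "\<rho> + 2 * d * int (k + n) = (\<rho> + 2 * d * int k) + d * (2 * int n)"
        by (simp add: algebra_simps)
      then show ?thesis using row by (metis mod_mult_self1)
    qed
    have "fst (zigzag n c0 \<rho> d k) = c \<or> fst (zigzag n c0 \<rho> d (k + n)) = c"
      using c c0 False by (auto simp: zigzag_def)
    moreover have "k < detour_len n" "k + n < detour_len n"
      using k False by (auto simp: detour_len_def)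
    ultimately show ?thesis using row row2 by (metis zigzag_def prod.collapse snd_conv)
  qed
qed

definition left_step :: "vtx \<Rightarrow> vtx \<Rightarrow> bool" where
  "left_step p q \<longleftrightarrow> {fst p, fst q} = {2, 3} \<and> \<bar>snd p - snd q\<bar> = 2"

definition right_step :: "nat \<Rightarrow> vtx \<Rightarrow> vtx \<Rightarrow> bool" where
  "right_step m p q \<longleftrightarrow> {fst p, fst q} = {int m - 4, int m - 3} \<and> \<bar>snd p - snd q\<bar> = 2"

definition band_offset :: "vtx \<Rightarrow> vtx \<Rightarrow> int" where
  "band_offset p q = (if {fst p, fst q} = {2, 3} then -2 else 2)"

definition step_dir :: "vtx \<Rightarrow> vtx \<Rightarrow> int" where
  "step_dir p q = (if snd p < snd q then -1 else 1)"

text \<open>The detour replacing the step from \<open>p\<close> to \<open>q\<close>: it enters the band two columns further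
  out, at row \<open>snd p + \<epsilon>\<close>, and zigzags away from \<open>q\<close> through one class.\<close>
definition detour :: "nat \<Rightarrow> vtx \<Rightarrow> vtx \<Rightarrow> int \<Rightarrow> vtx list" where
  "detour n p q \<epsilon> = map (\<lambda>k. (if even k then fst p + band_offset p q else fst q + band_offset p q,
                         snd p + \<epsilon> + 2 * step_dir p q * int k)) [0..<detour_len n]"

text \<open>The detour winds once (twice for odd \<open>n\<close>) around the band and ends next to
  \<open>\<sigma>\<^bsup>detour_shift n p q\<^esup> q\<close>.\<close>
definition detour_shift :: "nat \<Rightarrow> vtx \<Rightarrow> vtx \<Rightarrow> int" where
  "detour_shift n p q = step_dir p q * (if even n then 2 else 4)"

text \<open>The band (columns \<open>0, 1, m - 2, m - 1\<close>) projects onto a cylinder of two columns and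
  height \<open>2n\<close> in \<open>M\<^sub>m\<^sub>,\<^sub>n\<close>; \<open>\<sigma>\<close> identifies columns \<open>m - 2, m - 1\<close> with \<open>1, 0\<close>
  shifted by \<open>n\<close> rows.\<close>
definition band_coords :: "nat \<Rightarrow> nat \<Rightarrow> vtx \<Rightarrow> int \<times> int" where
  "band_coords m n x = (if fst x \<le> 1 then (fst x, snd x mod (2 * int n))
                else (int m - 1 - fst x, (snd x - int n) mod (2 * int n)))"

definition in_band :: "nat \<Rightarrow> vtx \<Rightarrow> bool" where
  "in_band m x \<longleftrightarrow> in_strip m x \<and> (fst x \<le> 1 \<or> int m - 2 \<le> fst x)"

text \<open>Invariant under zigzag steps (one column, two rows) and well defined modulo the cylinder
  height \<open>2n\<close>.\<close>
definition band_class :: "nat \<Rightarrow> nat \<Rightarrow> vtx \<Rightarrow> int" where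
  "band_class m n x =
     (if even n then (snd (band_coords m n x) - 2 * fst (band_coords m n x)) mod 4
      else snd (band_coords m n x) mod 2)"

definition detour_col0 :: "nat \<Rightarrow> vtx \<Rightarrow> vtx \<Rightarrow> int" where
  "detour_col0 m p q = (if left_step p q then fst p - 2 else int m - 3 - fst p)"

definition detour_row0 :: "nat \<Rightarrow> nat \<Rightarrow> vtx \<Rightarrow> vtx \<Rightarrow> int \<Rightarrow> int" where
  "detour_row0 m n p q \<epsilon> = (if left_step p q then snd p + \<epsilon> else snd p + \<epsilon> - int n)"

definition detour_class :: "nat \<Rightarrow> nat \<Rightarrow> vtx \<Rightarrow> vtx \<Rightarrow> int \<Rightarrow> int" where
  "detour_class m n p q \<epsilon> =
     (if even n then (detour_row0 m n p q \<epsilon> - 2 * detour_col0 m p q) mod 4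
      else detour_row0 m n p q \<epsilon> mod 2)"

lemma even_detour_len: "even (detour_len n)" by (simp add: detour_len_def)

lemma detour_len_ge_2: "1 \<le> n \<Longrightarrow> 2 \<le> detour_len n"
  by (auto simp: detour_len_def elim: evenE)

lemma band_coords_sigma_pow:
  assumes m: "4 \<le> m" and x: "in_band m x"
  shows "band_coords m n (sigma_pow m n j x) = band_coords m n x"
proof -
  define y where "y = sigma_pow m n j x"
  obtain a b where xab: "x = (a, b)" by (cases x)
  have "band_coords m n x = band_coords m n y"
  proof (cases "even j")
    case True
    then obtain t where j: "j = 2 * t" by auto
    have y2: "y = (a, b + t * (2 * int n))"
      using True j xab by (simp add: y_def sigma_pow_def algebra_simps)
    have "(b + t * (2 * int n) - int n) mod (2 * int n) = (b - int n) mod (2 * int n)"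
    proof -
      have "b + t * (2 * int n) - int n = (b - int n) + t * (2 * int n)" by simp
      then show ?thesis by (metis mod_mult_self1)
    qed
    then show ?thesis unfolding y2 xab band_coords_def by simp
  next
    case False
    then obtain t where j: "j = 2 * t + 1" by (metis oddE)
    have y2: "y = (int m - 1 - a, b + int n + t * (2 * int n))"
      using False j xab by (simp add: y_def sigma_pow_def algebra_simps)
    have "a \<le> 1 \<or> int m - 2 \<le> a" using x xab by (simp add: in_band_def)
    then show ?thesis
    proof
      assume a: "a \<le> 1"
      then have "\<not> int m - 1 - a \<le> 1" using m by simp
      then show ?thesis unfolding y2 xab band_coords_def using a by simp
    next
      assume a: "int m - 2 \<le> a"
      then have na: "\<not> a \<le> 1" using m by simp
      have "int m - 1 - a \<le> 1" using a by simp
      moreover have "(b + int n + t * (2 * int n)) mod (2 * int n) = (b - int n) mod (2 * int n)"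
      proof -
        have "b + int n + t * (2 * int n) = (b - int n) + (t + 1) * (2 * int n)"
          by (simp add: algebra_simps)
        then show ?thesis by (metis mod_mult_self1)
      qed
      ultimately show ?thesis unfolding y2 xab band_coords_def using na by simp
    qed
  qed
  then show ?thesis
    by (simp add: y_def)
qed

lemma sigma_pow_if_band_coords_eq:
  assumes eq: "band_coords m n x = band_coords m n y"
  shows "\<exists>j. y = sigma_pow m n j x"
proof -
  obtain a b where xab: "x = (a, b)" by (cases x)
  obtain a' b' where yab: "y = (a', b')" by (cases y)
  show ?thesis
  proof (cases "a \<le> 1")
    case True
    show ?thesis
    proof (cases "a' \<le> 1")
      case True': True
      have "a = a'" "b mod (2 * int n) = b' mod (2 * int n)"
        using eq True True' xab yab by (auto simp: band_coords_def)
      then obtain t where "b' - b = 2 * int n * t" by (metis mod_eq_dvd_iff dvd_def)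
      then have "y = sigma_pow m n (2 * t) x"
        using \<open>a = a'\<close> xab yab by (simp add: sigma_pow_def algebra_simps)
      then show ?thesis by blast
    next
      case False
      have "a = int m - 1 - a'" "b mod (2 * int n) = (b' - int n) mod (2 * int n)"
        using eq True False xab yab by (auto simp: band_coords_def)
      then obtain t where "b' - int n - b = 2 * int n * t" by (metis mod_eq_dvd_iff dvd_def)
      then have "y = sigma_pow m n (2 * t + 1) x" using \<open>a = int m - 1 - a'\<close> xab yab
        by (simp add: sigma_pow_def algebra_simps)
      then show ?thesis by blast
    qed
  next
    case False
    show ?thesis
    proof (cases "a' \<le> 1")
      case True
      have "int m - 1 - a = a'" "(b - int n) mod (2 * int n) = b' mod (2 * int n)"
        using eq True False xab yab by (auto simp: band_coords_def)
      then obtain t where "b' - (b - int n) = 2 * int n * t" by (metis mod_eq_dvd_iff dvd_def)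
      then have "y = sigma_pow m n (2 * t - 1) x" using \<open>int m - 1 - a = a'\<close> xab yab
        by (simp add: sigma_pow_def algebra_simps)
      then show ?thesis by blast
    next
      case False': False
      have "a = a'" "(b - int n) mod (2 * int n) = (b' - int n) mod (2 * int n)"
        using eq False False' xab yab by (auto simp: band_coords_def)
      then obtain t where "(b' - int n) - (b - int n) = 2 * int n * t"
        by (metis mod_eq_dvd_iff dvd_def)
      then have "y = sigma_pow m n (2 * t) x"
        using \<open>a = a'\<close> xab yab by (simp add: sigma_pow_def algebra_simps)
      then show ?thesis by blast
    qed
  qed
qed

lemma orbit_rep_eq_iff_band_coords_eq:
  assumes n: "1 \<le> n" and m: "4 \<le> m" and x: "in_band m x"
  shows "orbit_rep m n x = orbit_rep m n y \<longleftrightarrow> band_coords m n x = band_coords m n y"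
proof
  assume "orbit_rep m n x = orbit_rep m n y"
  then have "y = sigma_pow m n (snd y div int n - snd x div int n) x"
    by (rule orbit_rep_eq_imp_sigma_pow[OF n])
  then show "band_coords m n x = band_coords m n y"
    using band_coords_sigma_pow[OF m x] by metis
next
  assume "band_coords m n x = band_coords m n y"
  then obtain j where "y = sigma_pow m n j x"
    using sigma_pow_if_band_coords_eq by blast
  then show "orbit_rep m n x = orbit_rep m n y"
    using orbit_rep_sigma_pow[OF n] by simp
qed

lemma left_stepD:
  assumes "left_step p q"
  shows "band_offset p q = -2" "fst p + fst q = 5" "fst p = 2 \<or> fst p = 3" "snd p - snd q = 2 * step_dir p q"
  using assms unfolding left_step_def band_offset_def step_dir_def by (auto simp: doubleton_eq_iff)

lemma right_stepD:
  assumes "right_step m p q" "7 \<le> m"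
  shows "band_offset p q = 2" "fst p + fst q = 2 * int m - 7" "fst p = int m - 4 \<or> fst p = int m - 3"
    "snd p - snd q = 2 * step_dir p q" "\<not> left_step p q"
  using assms unfolding right_step_def band_offset_def step_dir_def left_step_def by (auto simp: doubleton_eq_iff)

lemma step_dir_cases: "step_dir p q = 1 \<or> step_dir p q = -1"
  by (simp add: step_dir_def)

lemma length_detour: "length (detour n p q \<epsilon>) = detour_len n"
  by (simp add: detour_def)

lemma nth_detour: "k < detour_len n \<Longrightarrow> detour n p q \<epsilon> ! k =
   (if even k then fst p + band_offset p q else fst q + band_offset p q, snd p + \<epsilon> + 2 * step_dir p q * int k)"
  by (simp add: detour_def)

lemma band_coords_detour:
  assumes m: "7 \<le> m" and E: "left_step p q \<or> right_step m p q" and k: "k < detour_len n"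
  shows "band_coords m n (detour n p q \<epsilon> ! k) = zigzag n (detour_col0 m p q) (detour_row0 m n p q \<epsilon>) (step_dir p q) k"
  using E
proof
  assume L: "left_step p q"
  note f = left_stepD[OF L]
  have c: "(if even k then fst p + band_offset p q else fst q + band_offset p q) \<le> 1"
    using f by auto
  show ?thesis
    unfolding nth_detour[OF k] band_coords_def zigzag_def detour_col0_def detour_row0_def using c L f
    by (auto simp: algebra_simps)
next
  assume R: "right_step m p q"
  note f = right_stepD[OF R m]
  have c: "\<not> (if even k then fst p + band_offset p q else fst q + band_offset p q) \<le> 1"
    using f m by auto
  show ?thesis
    unfolding nth_detour[OF k] band_coords_def zigzag_def detour_col0_def detour_row0_def using c f
    by (auto simp: algebra_simps)
qed

lemma in_band_detour:
  assumes m: "7 \<le> m" and E: "left_step p q \<or> right_step m p q" and z: "z \<in> set (detour n p q \<epsilon>)"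
  shows "in_band m z"
proof -
  obtain k where k: "k < detour_len n" and zk: "z = detour n p q \<epsilon> ! k"
    using z by (metis length_detour in_set_conv_nth)
  show ?thesis using E
  proof
    assume L: "left_step p q"
    note f = left_stepD[OF L]
    show ?thesis unfolding zk nth_detour[OF k] in_band_def in_strip_def using f m by auto
  next
    assume R: "right_step m p q"
    note f = right_stepD[OF R m]
    show ?thesis unfolding zk nth_detour[OF k] in_band_def in_strip_def using f m by auto
  qed
qed

lemma detour_not_Nil: "1 \<le> n \<Longrightarrow> detour n p q \<epsilon> \<noteq> []"
  using detour_len_ge_2[of n] by (auto simp: detour_def)

lemma knight_adj_hd_detour:
  assumes n: "1 \<le> n" and e: "\<epsilon> = 1 \<or> \<epsilon> = -1"
  shows "knight_adj p (hd (detour n p q \<epsilon>))"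
proof -
  have k: "0 < detour_len n" using detour_len_ge_2[OF n] by simp
  have h: "hd (detour n p q \<epsilon>) = (fst p + band_offset p q, snd p + \<epsilon>)"
    using nth_detour[OF k] detour_not_Nil[OF n] by (simp add: hd_conv_nth)
  have "band_offset p q = 2 \<or> band_offset p q = -2" by (simp add: band_offset_def)
  then show ?thesis unfolding h knight_adj_iff using e by auto
qed

lemma successively_detour:
  assumes m: "7 \<le> m" and E: "left_step p q \<or> right_step m p q"
  shows "successively knight_adj (detour n p q \<epsilon>)"
proof -
  have d1: "\<bar>fst p - fst q\<bar> = 1"
    using E
  proof
    assume L: "left_step p q" show ?thesis using left_stepD(2,3)[OF L] by auto
  next
    assume R: "right_step m p q" show ?thesis using right_stepD(2,3)[OF R m] by auto
  qed
  show ?thesis unfolding successively_conv_nth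
  proof (intro allI impI)
    fix i assume i: "Suc i < length (detour n p q \<epsilon>)"
    then have i1: "i < detour_len n" "Suc i < detour_len n" by (auto simp: length_detour)
    have "\<bar>2 * step_dir p q\<bar> = 2" using step_dir_cases[of p q] by auto
    then show "knight_adj (detour n p q \<epsilon> ! i) (detour n p q \<epsilon> ! Suc i)"
      unfolding nth_detour[OF i1(1)] nth_detour[OF i1(2)] knight_adj_iff using d1
      by (auto simp: algebra_simps abs_minus_commute)
  qed
qed


lemma even_detour_shift: "even (detour_shift n p q)" by (simp add: detour_shift_def)

lemma detour_shift_mult: "detour_shift n p q * int n = 2 * step_dir p q * int (detour_len n)"
  by (simp add: detour_shift_def detour_len_def)

lemma knight_adj_last_detour:
  assumes n: "1 \<le> n" and m: "7 \<le> m" and E: "left_step p q \<or> right_step m p q" and e: "\<epsilon> = 1 \<or> \<epsilon> = -1"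
  shows "knight_adj (last (detour n p q \<epsilon>)) (sigma_pow m n (detour_shift n p q) q)"
proof -
  define L where "L = detour_len n"
  have L2: "2 \<le> L" using detour_len_ge_2[OF n] by (simp add: L_def)
  have k: "L - 1 < detour_len n" using L2 by (simp add: L_def)
  have odd: "\<not> even (L - 1)" using even_detour_len[of n] L2 by (simp add: L_def)
  have l: "last (detour n p q \<epsilon>) = detour n p q \<epsilon> ! (L - 1)"
    using detour_not_Nil[OF n] by (simp add: last_conv_nth length_detour L_def)
  have l2: "last (detour n p q \<epsilon>) = (fst q + band_offset p q, snd p + \<epsilon> + 2 * step_dir p q * int (L - 1))"
    unfolding l nth_detour[OF k] using odd by simp
  have sq: "sigma_pow m n (detour_shift n p q) q = (fst q, snd q + 2 * step_dir p q * int L)"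
    using sigma_pow_even[OF even_detour_shift] detour_shift_mult by (simp add: L_def)
  have sd: "snd p - snd q = 2 * step_dir p q"
    using E left_stepD(4) right_stepD(4)[OF _ m] by blast
  have iL: "int (L - 1) = int L - 1" using L2 by simp
  have "snd p + \<epsilon> + 2 * step_dir p q * int (L - 1) - (snd q + 2 * step_dir p q * int L) = \<epsilon>"
    using sd iL by (simp add: algebra_simps)
  moreover have "band_offset p q = 2 \<or> band_offset p q = -2" by (simp add: band_offset_def)
  ultimately show ?thesis unfolding l2 sq knight_adj_iff using e by auto
qed

lemma detour_col0_cases:
  assumes m: "7 \<le> m" and E: "left_step p q \<or> right_step m p q"
  shows "detour_col0 m p q = 0 \<or> detour_col0 m p q = 1"
  using E
proof
  assume L: "left_step p q" show ?thesis using left_stepD(3)[OF L] L by (auto simp: detour_col0_def)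
next
  assume R: "right_step m p q" show ?thesis using right_stepD(3,5)[OF R m] by (auto simp: detour_col0_def)
qed

lemma distinct_orbit_rep_detour:
  assumes n: "1 \<le> n" and m: "7 \<le> m" and E: "left_step p q \<or> right_step m p q"
  shows "distinct (map (orbit_rep m n) (detour n p q \<epsilon>))"
  unfolding distinct_conv_nth
proof (intro allI impI)
  fix i j assume i: "i < length (map (orbit_rep m n) (detour n p q \<epsilon>))" and j: "j < length (map (orbit_rep m n) (detour n p q \<epsilon>))"
    and ij: "i \<noteq> j"
  have i': "i < detour_len n" and j': "j < detour_len n" using i j by (auto simp: length_detour)
  have "detour n p q \<epsilon> ! i \<in> set (detour n p q \<epsilon>)"
    using i' by (simp add: length_detour)
  then have bi: "in_band m (detour n p q \<epsilon> ! i)"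
    using in_band_detour[OF m E] by auto
  show "map (orbit_rep m n) (detour n p q \<epsilon>) ! i \<noteq> map (orbit_rep m n) (detour n p q \<epsilon>) ! j"
  proof
    assume "map (orbit_rep m n) (detour n p q \<epsilon>) ! i = map (orbit_rep m n) (detour n p q \<epsilon>) ! j"
    then have "orbit_rep m n (detour n p q \<epsilon> ! i) = orbit_rep m n (detour n p q \<epsilon> ! j)"
      using i' j' by (simp add: length_detour)
    then have "band_coords m n (detour n p q \<epsilon> ! i) = band_coords m n (detour n p q \<epsilon> ! j)"
      using orbit_rep_eq_iff_band_coords_eq[OF n _ bi] m by simp
    then have "zigzag n (detour_col0 m p q) (detour_row0 m n p q \<epsilon>) (step_dir p q) i = zigzag n (detour_col0 m p q) (detour_row0 m n p q \<epsilon>) (step_dir p q) j"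
      using band_coords_detour[OF m E i'] band_coords_detour[OF m E j'] by simp
    then have "i = j" using zigzag_inj[OF n step_dir_cases detour_col0_cases[OF m E] i' j'] by blast
    then show False using ij by simp
  qed
qed

lemma band_class_detour:
  assumes m: "7 \<le> m" and E: "left_step p q \<or> right_step m p q" and z: "z \<in> set (detour n p q \<epsilon>)"
  shows "band_class m n z = detour_class m n p q \<epsilon>"
proof -
  obtain k where k: "k < detour_len n" and zk: "z = detour n p q \<epsilon> ! k"
    using z by (metis length_detour in_set_conv_nth)
  have b: "band_coords m n z = zigzag n (detour_col0 m p q) (detour_row0 m n p q \<epsilon>) (step_dir p q) k"
    using band_coords_detour[OF m E k] zk by simp
  show ?thesis
  proof (cases "even n")
    case True
    then show ?thesis unfolding band_class_def detour_class_def b using zigzag_class_even[OF True step_dir_cases] by simp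
  next
    case False
    then show ?thesis unfolding band_class_def detour_class_def b using zigzag_class_odd by simp
  qed
qed

lemma band_coords_range:
  assumes n: "1 \<le> n" and m: "4 \<le> m" and v: "in_band m v"
  shows "(fst (band_coords m n v) = 0 \<or> fst (band_coords m n v) = 1) \<and> 0 \<le> snd (band_coords m n v) \<and> snd (band_coords m n v) < 2 * int n"
  using v n m unfolding in_band_def in_strip_def band_coords_def by auto

lemma detour_covers_class:
  assumes n: "1 \<le> n" and m: "7 \<le> m" and E: "left_step p q \<or> right_step m p q"
    and v: "in_band m v" and c: "band_class m n v = detour_class m n p q \<epsilon>"
  shows "\<exists>z\<in>set (detour n p q \<epsilon>). orbit_rep m n z = orbit_rep m n v"
proof -
  obtain c r where cr: "band_coords m n v = (c, r)" by (cases "band_coords m n v")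
  have rng: "c = 0 \<or> c = 1" "0 \<le> r" "r < 2 * int n" using band_coords_range[OF n _ v] m cr by auto
  have cl: "if even n then (r - 2 * c) mod 4 = (detour_row0 m n p q \<epsilon> - 2 * detour_col0 m p q) mod 4
            else r mod 2 = detour_row0 m n p q \<epsilon> mod 2"
    using c cr unfolding band_class_def detour_class_def by (simp split: if_splits)
  obtain k where k: "k < detour_len n" and zk: "zigzag n (detour_col0 m p q) (detour_row0 m n p q \<epsilon>) (step_dir p q) k = (c, r)"
    using zigzag_surj[OF n step_dir_cases detour_col0_cases[OF m E] rng cl] by blast
  have "band_coords m n (detour n p q \<epsilon> ! k) = band_coords m n v"
    using band_coords_detour[OF m E k] zk cr by simp
  moreover have "detour n p q \<epsilon> ! k \<in> set (detour n p q \<epsilon>)" using k by (simp add: length_detour)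
  then have "in_band m (detour n p q \<epsilon> ! k)" using in_band_detour[OF m E] by blast
  ultimately have "orbit_rep m n (detour n p q \<epsilon> ! k) = orbit_rep m n v"
    using orbit_rep_eq_iff_band_coords_eq[OF n, of m "detour n p q \<epsilon> ! k" v] m by simp
  moreover have "detour n p q \<epsilon> ! k \<in> set (detour n p q \<epsilon>)" using k by (simp add: length_detour)
  ultimately show ?thesis by blast
qed

lemma detour_class_sign_flip:
  assumes "even n"
  shows "detour_class m n p q (-1) = (detour_class m n p q 1 + 2) mod 4"
proof -
  have z: "detour_row0 m n p q (-1) = detour_row0 m n p q 1 - 2" by (simp add: detour_row0_def)
  have "detour_class m n p q (-1) = ((detour_row0 m n p q 1 - 2 * detour_col0 m p q) - 2) mod 4"
    using assms unfolding detour_class_def z by (simp add: algebra_simps)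
  also have "\<dots> = ((detour_row0 m n p q 1 - 2 * detour_col0 m p q) + 2) mod 4"
  proof -
    have eq: "(detour_row0 m n p q 1 - 2 * detour_col0 m p q) - 2 = ((detour_row0 m n p q 1 - 2 * detour_col0 m p q) + 2) + (-1) * 4"
      by simp
    show ?thesis by (subst eq) (rule mod_mult_self1)
  qed
  also have "\<dots> = (detour_class m n p q 1 + 2) mod 4"
    using assms by (simp add: detour_class_def mod_add_left_eq)
  finally show ?thesis .
qed

lemma detour_class_parity:
  assumes "even n" "\<epsilon> = 1 \<or> \<epsilon> = -1"
  shows "detour_class m n p q \<epsilon> mod 2 = (snd p + 1) mod 2"
proof -
  have "detour_class m n p q \<epsilon> mod 2 = (detour_row0 m n p q \<epsilon> - 2 * detour_col0 m p q) mod 2"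
    using assms(1) by (simp add: detour_class_def mod_mod_cancel)
  also have "\<dots> = detour_row0 m n p q \<epsilon> mod 2"
  proof -
    have eq: "detour_row0 m n p q \<epsilon> - 2 * detour_col0 m p q = detour_row0 m n p q \<epsilon> + (- detour_col0 m p q) * 2"
      by simp
    show ?thesis by (subst eq) (rule mod_mult_self1)
  qed
  also have "\<dots> = (snd p + 1) mod 2"
  proof -
    obtain t' where "n = 2 * t'" using assms(1) by (metis evenE)
    then obtain t where n: "int n = 2 * t" by (intro that[of "int t'"]) simp
    have eq: "detour_row0 m n p q \<epsilon> = (snd p + 1) + ((if \<epsilon> = 1 then 0 else -1) + (if left_step p q then 0 else - t)) * 2"
      using assms(2) n by (auto simp: detour_row0_def algebra_simps)
    show ?thesis by (subst eq) (rule mod_mult_self1)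
  qed
  finally show ?thesis .
qed

lemma detour_class_range: "even n \<Longrightarrow> 0 \<le> detour_class m n p q \<epsilon> \<and> detour_class m n p q \<epsilon> < 4"
  by (simp add: detour_class_def)

lemma detour_class_odd:
  assumes "odd n" "\<epsilon> = 1 \<or> \<epsilon> = -1"
  shows "detour_class m n p q \<epsilon> = (if left_step p q then (snd p + 1) mod 2 else snd p mod 2)"
proof -
  obtain t' where "n = 2 * t' + 1" using assms(1) by (metis oddE)
  then obtain t where n: "int n = 2 * t + 1" by (intro that[of "int t'"]) simp
  have eq: "detour_row0 m n p q \<epsilon> = (if left_step p q then snd p + 1 else snd p) + ((if \<epsilon> = 1 then 0 else -1) + (if left_step p q then 0 else - t)) * 2"
    using assms(2) n by (auto simp: detour_row0_def algebra_simps)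
  have "detour_row0 m n p q \<epsilon> mod 2 = (if left_step p q then snd p + 1 else snd p) mod 2"
    by (subst eq) (rule mod_mult_self1)
  then show ?thesis using assms(1) unfolding detour_class_def by simp
qed

lemma orbit_rep_iota: "orbit_rep (K + 4) n (iota x) = iota (orbit_rep K n x)"
  by (simp add: orbit_rep_def iota_def)

lemma sigma_pow_iota: "sigma_pow (K + 4) n j (iota x) = iota (sigma_pow K n j x)"
  by (simp add: sigma_pow_def iota_def)

lemma knight_adj_iota: "knight_adj (iota p) (iota q) \<longleftrightarrow> knight_adj p q"
  by (simp add: knight_adj_def iota_def)

lemma inj_iota: "inj iota"
  by (rule injI) (auto simp: iota_def prod_eq_iff)

lemma in_strip_iota:
  assumes "in_strip K x"
  shows "in_strip (K + 4) (iota x) \<and> 2 \<le> fst (iota x) \<and> fst (iota x) \<le> int (K + 4) - 3"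
  using assms by (simp add: in_strip_def iota_def)

lemma orbit_rep_band_ne_inner:
  assumes m: "4 \<le> m" and x: "in_band m x" and y1: "2 \<le> fst y" and y2: "fst y \<le> int m - 3"
  shows "orbit_rep m n x \<noteq> orbit_rep m n y"
proof -
  have "fst (orbit_rep m n x) \<le> 1 \<or> int m - 2 \<le> fst (orbit_rep m n x)"
    using x by (auto simp: orbit_rep_def in_band_def)
  moreover have "2 \<le> fst (orbit_rep m n y) \<and> fst (orbit_rep m n y) \<le> int m - 3"
    using y1 y2 by (auto simp: orbit_rep_def)
  ultimately show ?thesis using m by auto
qed

lemma distinct_concat_map:
  assumes "distinct xs" and "\<forall>i\<in>set xs. distinct (map f (P i))"
    and "\<forall>i\<in>set xs. \<forall>j\<in>set xs. i \<noteq> j \<longrightarrow> f ` set (P i) \<inter> f ` set (P j) = {}"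
  shows "distinct (map f (concat (map P xs)))"
  using assms
proof (induction xs)
  case Nil
  then show ?case by simp
next
  case (Cons x xs)
  have "f ` set (P x) \<inter> f ` set (concat (map P xs)) = {}"
  proof (rule ccontr)
    assume "f ` set (P x) \<inter> f ` set (concat (map P xs)) \<noteq> {}"
    then obtain a b j where a: "a \<in> set (P x)" and j: "j \<in> set xs" and b: "b \<in> set (P j)" and ab: "f a = f b"
      by auto
    have "x \<noteq> j" using Cons.prems(1) j by auto
    then have "f ` set (P x) \<inter> f ` set (P j) = {}" using Cons.prems(3) j by simp
    then show False using a b ab by auto
  qed
  then show ?case using Cons by (auto simp: image_Un)
qed

lemma set_detours: "y \<in> set (detours P i k) \<longleftrightarrow> (\<exists>t\<in>{i..<i + k}. y \<in> set (P t))"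
  by (auto simp: detours_def)


lemma detour_first_step:
  assumes n: "1 \<le> n" and m: "7 \<le> m" and E: "left_step p q \<or> right_step m p q" and e: "\<epsilon> = 1 \<or> \<epsilon> = -1"
    and s: "even s"
    and p': "p' = iota (sigma_pow m n s (detour n p q \<epsilon> ! 0))"
    and q': "q' = iota (sigma_pow m n s (detour n p q \<epsilon> ! 1))"
  shows "(left_step p q \<longrightarrow> left_step p' q') \<and> (right_step m p q \<longrightarrow> right_step (m + 4) p' q') \<and>
         step_dir p' q' = - step_dir p q \<and> (even (snd p') \<longleftrightarrow> odd (snd p))"
proof -
  have L2: "2 \<le> detour_len n" using detour_len_ge_2[OF n] .
  have z0: "detour n p q \<epsilon> ! 0 = (fst p + band_offset p q, snd p + \<epsilon>)"
    using nth_detour[of 0 n] L2 by simp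
  have z1: "detour n p q \<epsilon> ! 1 = (fst q + band_offset p q, snd p + \<epsilon> + 2 * step_dir p q)"
    using nth_detour[of 1 n] L2 by simp
  have P: "p' = (fst p + band_offset p q + 2, snd p + \<epsilon> + s * int n)"
    unfolding p' z0 using sigma_pow_even[OF s] by (simp add: iota_def)
  have Q: "q' = (fst q + band_offset p q + 2, snd p + \<epsilon> + 2 * step_dir p q + s * int n)"
    unfolding q' z1 using sigma_pow_even[OF s] by (simp add: iota_def)
  have dd: "step_dir p' q' = - step_dir p q"
    using step_dir_cases[of p q] unfolding P Q step_dir_def by auto
  have ev: "even (s * int n)" using s by simp
  have par: "even (snd p') \<longleftrightarrow> odd (snd p)"
    using e ev unfolding P by auto
  have l: "left_step p q \<longrightarrow> left_step p' q'"
  proof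
    assume L: "left_step p q"
    have "band_offset p q = -2" using left_stepD(1)[OF L] .
    then show "left_step p' q'" using L step_dir_cases[of p q] unfolding left_step_def P Q by auto
  qed
  have r: "right_step m p q \<longrightarrow> right_step (m + 4) p' q'"
  proof
    assume R: "right_step m p q"
    have "band_offset p q = 2" using right_stepD(1)[OF R m] .
    then show "right_step (m + 4) p' q'" using R step_dir_cases[of p q] unfolding right_step_def P Q
      by (auto simp: doubleton_eq_iff)
  qed
  show ?thesis using l r dd par by blast
qed

lemma detour_class_eq_if_orbit_rep_eq:
  assumes n: "1 \<le> n" and m: "7 \<le> m"
    and E: "left_step p q \<or> right_step m p q" and E': "left_step p' q' \<or> right_step m p' q'"
    and z: "z \<in> set (detour n p q \<epsilon>)" and z': "z' \<in> set (detour n p' q' \<epsilon>')"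
    and eq: "orbit_rep m n z = orbit_rep m n z'"
  shows "detour_class m n p q \<epsilon> = detour_class m n p' q' \<epsilon>'"
proof -
  have "band_coords m n z = band_coords m n z'"
    using eq orbit_rep_eq_iff_band_coords_eq[OF n _ in_band_detour[OF m E z]] m
    by simp
  then have "band_class m n z = band_class m n z'"
    by (simp add: band_class_def)
  then show ?thesis
    using band_class_detour[OF m E z] band_class_detour[OF m E' z'] by simp
qed

section \<open>Inserting a full set of detours\<close>

definition detour_signs :: "nat \<Rightarrow> nat \<Rightarrow> vtx list \<Rightarrow> nat list \<Rightarrow> (nat \<Rightarrow> int) \<Rightarrow> bool" where
  "detour_signs m n u I eps \<longleftrightarrow>
     (\<forall>i\<in>set I. eps i = 1 \<or> eps i = -1) \<and>
     (\<forall>i\<in>set I. \<forall>j\<in>set I. detour_class m n (u!i) (u!Suc i) (eps i)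
                            = detour_class m n (u!j) (u!Suc j) (eps j) \<longrightarrow> i = j) \<and>
     (\<forall>v. in_band m v \<longrightarrow> (\<exists>i\<in>set I. band_class m n v = detour_class m n (u!i) (u!Suc i) (eps i)))"

locale detour_insertion =
  fixes n K m :: nat and c :: int and w u :: "vtx list" and I :: "nat list" and eps :: "nat \<Rightarrow> int"
  assumes n_pos: "1 \<le> n" and K_ge: "3 \<le> K" and ham: "ham_lift K n c w"
    and m_eq: "m = K + 4" and u_eq: "u = map iota w"
    and distinct_I: "distinct I"
    and side_steps: "\<forall>i\<in>set I. Suc i < length u \<and> (left_step (u!i) (u!Suc i) \<or> right_step m (u!i) (u!Suc i))"
    and signs: "detour_signs m n u I eps"
    and balanced: "sum_list (map (\<lambda>i. step_dir (u!i) (u!Suc i)) I) = 0"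
begin

definition detour_at :: "nat \<Rightarrow> vtx list" where
  "detour_at i = (if i \<in> set I then detour n (u!i) (u!Suc i) (eps i) else [])"

definition shift_at :: "nat \<Rightarrow> int" where
  "shift_at i = (if i \<in> set I then detour_shift n (u!i) (u!Suc i) else 0)"

definition extended :: "vtx list" where
  "extended = splice m n detour_at shift_at 0 0 u"

abbreviation N :: nat where
  "N \<equiv> length u - 1"

lemma m_ge: "7 \<le> m"
  using m_eq K_ge by simp

lemma length_u: "2 \<le> length u"
  using ham u_eq by (simp add: ham_lift_def)

lemma side_step: "i \<in> set I \<Longrightarrow> left_step (u!i) (u!Suc i) \<or> right_step m (u!i) (u!Suc i)"
  using side_steps by blast

lemma sign: "i \<in> set I \<Longrightarrow> eps i = 1 \<or> eps i = -1"
  using signs by (simp add: detour_signs_def)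

lemma in_set_I_less: "i \<in> set I \<Longrightarrow> i < N"
  using side_steps by auto

lemma in_band_detour_at: "z \<in> set (detour_at i) \<Longrightarrow> in_band m z"
  by (auto simp: detour_at_def in_band_detour[OF m_ge side_step] split: if_splits)

lemma inner_u: "x \<in> set u \<Longrightarrow> in_strip m x \<and> 2 \<le> fst x \<and> fst x \<le> int m - 3"
  using ham in_strip_iota u_eq m_eq by (auto simp: ham_lift_def)

lemma sum_shift_at: "sum shift_at {0..<N} = 0"
proof -
  have "sum shift_at {0..<N} = sum shift_at (set I)"
    using in_set_I_less by (intro sum.mono_neutral_right) (auto simp: shift_at_def)
  also have "\<dots> = (\<Sum>i\<in>set I. detour_shift n (u!i) (u!Suc i))"
    by (simp add: shift_at_def)
  also have "\<dots> = (if even n then 2 else 4) * (\<Sum>i\<in>set I. step_dir (u!i) (u!Suc i))"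
    by (simp add: detour_shift_def sum_distrib_left mult.commute)
  also have "(\<Sum>i\<in>set I. step_dir (u!i) (u!Suc i)) = 0"
    using balanced distinct_I by (simp add: sum_list_distinct_conv_sum_set)
  finally show ?thesis by simp
qed

text \<open>The detour shifts cancel because the step directions sum to zero, so the extended walk
  still closes up with \<open>\<sigma>\<^sup>c\<close>.\<close>
lemma extended_snoc: "extended = splice m n detour_at shift_at 0 0 (butlast u) @ [last u]"
proof -
  have "u = butlast u @ [last u]"
    using length_u by (metis append_butlast_last_id list.size(3) not_numeral_le_zero)
  then have "extended = splice m n detour_at shift_at 0 0 (butlast u @ [last u])"
    unfolding extended_def by simp
  also have "\<dots> = splice m n detour_at shift_at 0 0 (butlast u)
      @ [sigma_pow m n (0 + sum shift_at {0..<0 + length (butlast u)}) (last u)]"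
    by (rule splice_snoc) (use in_set_I_less in \<open>auto simp: detour_at_def\<close>)
  finally show ?thesis
    using sum_shift_at by simp
qed

lemma hd_extended: "hd extended = hd u"
proof -
  have "u \<noteq> []"
    using length_u by auto
  then show ?thesis
    by (simp add: extended_def hd_splice)
qed

lemma last_u: "last u = sigma_pow m n c (hd u)"
proof -
  have "w \<noteq> []" and "last w = sigma_pow K n c (hd w)"
    using ham by (auto simp: ham_lift_def)
  then show ?thesis
    using u_eq m_eq by (simp add: last_map hd_map sigma_pow_iota)
qed

lemma in_strip_extended: "\<forall>x\<in>set extended. in_strip m x"
proof
  fix x assume "x \<in> set extended"
  then obtain j y where xy: "x = sigma_pow m n j y"
    and y: "y \<in> set u \<or> y \<in> set (detours detour_at 0 (length u))"
    unfolding extended_def using set_splice by blast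
  have "in_strip m y"
    using y
  proof
    assume "y \<in> set (detours detour_at 0 (length u))"
    then obtain t where "y \<in> set (detour_at t)"
      by (auto simp: set_detours)
    then show ?thesis
      using in_band_detour_at in_band_def by blast
  qed (use inner_u in blast)
  then show "in_strip m x"
    using xy in_strip_sigma_pow by simp
qed

lemma successively_extended: "successively knight_adj extended"
  unfolding extended_def
proof (rule successively_splice)
  show "successively knight_adj u"
    using ham u_eq by (simp add: ham_lift_def successively_map knight_adj_iota)
next
  fix k assume "k < length u" "detour_at (0 + k) = []"
  then show "shift_at (0 + k) = 0"
    using detour_not_Nil[OF n_pos] by (auto simp: detour_at_def shift_at_def split: if_splits)
next
  fix k assume "k < length u" "detour_at (0 + k) \<noteq> []"
  then have k: "k \<in> set I"
    by (auto simp: detour_at_def split: if_splits)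
  then show "Suc k < length u \<and> knight_adj (u ! k) (hd (detour_at (0 + k))) \<and>
      successively knight_adj (detour_at (0 + k)) \<and>
      knight_adj (last (detour_at (0 + k))) (sigma_pow m n (shift_at (0 + k)) (u ! Suc k))"
    using side_steps knight_adj_hd_detour[OF n_pos sign[OF k]]
      successively_detour[OF m_ge side_step[OF k]]
      knight_adj_last_detour[OF n_pos m_ge side_step[OF k] sign[OF k]]
    by (simp add: detour_at_def shift_at_def)
qed

lemma mset_orbit_rep_extended:
  "mset (map (orbit_rep m n) (butlast extended))
     = mset (map (orbit_rep m n) (butlast u)) + mset (map (orbit_rep m n) (detours detour_at 0 N))"
proof -
  have "butlast extended = splice m n detour_at shift_at 0 0 (butlast u)"
    by (subst extended_snoc) simp
  then show ?thesis
    using mset_map_splice[of "orbit_rep m n" m n detour_at shift_at 0 0 "butlast u",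
        OF orbit_rep_sigma_pow[OF n_pos]]
    by simp
qed

lemma distinct_orbit_rep_detours: "distinct (map (orbit_rep m n) (detours detour_at 0 N))"
  unfolding detours_def
proof (rule distinct_concat_map)
  show "\<forall>i\<in>set [0..<0 + N]. distinct (map (orbit_rep m n) (detour_at i))"
    using distinct_orbit_rep_detour[OF n_pos m_ge side_step] by (auto simp: detour_at_def)
next
  show "\<forall>i\<in>set [0..<0 + N]. \<forall>j\<in>set [0..<0 + N]. i \<noteq> j \<longrightarrow>
      orbit_rep m n ` set (detour_at i) \<inter> orbit_rep m n ` set (detour_at j) = {}"
  proof (intro ballI impI equals0I)
    fix i j z assume "i \<noteq> j" and "z \<in> orbit_rep m n ` set (detour_at i) \<inter> orbit_rep m n ` set (detour_at j)"
    then obtain a b where a: "a \<in> set (detour_at i)" and b: "b \<in> set (detour_at j)"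
      and ab: "orbit_rep m n a = orbit_rep m n b"
      by blast
    have i: "i \<in> set I" and j: "j \<in> set I"
      using a b by (auto simp: detour_at_def split: if_splits)
    have "detour_class m n (u!i) (u!Suc i) (eps i) = detour_class m n (u!j) (u!Suc j) (eps j)"
      using detour_class_eq_if_orbit_rep_eq[OF n_pos m_ge side_step[OF i] side_step[OF j] _ _ ab] a b i j
      by (simp add: detour_at_def)
    then show False
      using signs i j \<open>i \<noteq> j\<close> by (auto simp: detour_signs_def)
  qed
qed simp

lemma distinct_orbit_rep_extended: "distinct (map (orbit_rep m n) (butlast extended))"
proof -
  have "distinct (map (orbit_rep m n) (butlast u))"
  proof -
    have "map (orbit_rep m n) (butlast u) = map iota (map (orbit_rep K n) (butlast w))"
      using u_eq m_eq by (simp add: map_butlast[symmetric] orbit_rep_iota)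
    moreover have "distinct (map (orbit_rep K n) (butlast w))"
      using ham by (simp add: ham_lift_def)
    moreover have "distinct (map iota xs)" if "distinct xs" for xs :: "vtx list"
      using that by (simp add: distinct_map inj_on_subset[OF inj_iota])
    ultimately show ?thesis
      by metis
  qed
  moreover have "orbit_rep m n ` set (butlast u) \<inter> orbit_rep m n ` set (detours detour_at 0 N) = {}"
  proof (intro equals0I)
    fix z assume "z \<in> orbit_rep m n ` set (butlast u) \<inter> orbit_rep m n ` set (detours detour_at 0 N)"
    then obtain a b where a: "a \<in> set (butlast u)" and b: "b \<in> set (detours detour_at 0 N)"
      and ab: "orbit_rep m n b = orbit_rep m n a"
      by auto
    have "a \<in> set u"
      using a by (rule in_set_butlastD)
    then have "2 \<le> fst a" "fst a \<le> int m - 3"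
      using inner_u by blast+
    moreover obtain t where "b \<in> set (detour_at t)"
      using b by (auto simp: set_detours)
    then have "in_band m b"
      by (rule in_band_detour_at)
    ultimately have "orbit_rep m n b \<noteq> orbit_rep m n a"
      using orbit_rep_band_ne_inner[of m b a n] m_ge by simp
    then show False
      using ab by simp
  qed
  ultimately have "distinct (map (orbit_rep m n) (butlast u) @ map (orbit_rep m n) (detours detour_at 0 N))"
    using distinct_orbit_rep_detours by simp
  moreover have "mset (map (orbit_rep m n) (butlast extended))
      = mset (map (orbit_rep m n) (butlast u) @ map (orbit_rep m n) (detours detour_at 0 N))"
    using mset_orbit_rep_extended by simp
  ultimately show ?thesis
    using mset_eq_imp_distinct_iff by blast
qed

lemma orbit_rep_extended_covers:
  assumes v: "in_strip m v"
  shows "orbit_rep m n v \<in> orbit_rep m n ` set (butlast extended)"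
proof -
  have set_eq: "orbit_rep m n ` set (butlast extended)
      = orbit_rep m n ` set (butlast u) \<union> orbit_rep m n ` set (detours detour_at 0 N)"
  proof -
    have "set (map (orbit_rep m n) (butlast extended))
        = set (map (orbit_rep m n) (butlast u) @ map (orbit_rep m n) (detours detour_at 0 N))"
      using mset_orbit_rep_extended by (metis mset_append mset_eq_setD)
    then show ?thesis
      by simp
  qed
  show ?thesis
  proof (cases "in_band m v")
    case True
    then obtain i where i: "i \<in> set I"
      and cls: "band_class m n v = detour_class m n (u!i) (u!Suc i) (eps i)"
      using signs True unfolding detour_signs_def by blast
    obtain z where z: "z \<in> set (detour n (u!i) (u!Suc i) (eps i))" and oz: "orbit_rep m n z = orbit_rep m n v"
      using detour_covers_class[OF n_pos m_ge side_step[OF i] True cls] by blast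
    have "z \<in> set (detours detour_at 0 N)"
      using z i in_set_I_less by (auto simp: set_detours detour_at_def)
    then show ?thesis
      using oz set_eq by (metis UnI2 image_eqI)
  next
    case False
    then have inner: "2 \<le> fst v" "fst v \<le> int m - 3"
      using v by (auto simp: in_band_def in_strip_def)
    define v0 where "v0 = (fst v - 2, snd v)"
    have v: "v = iota v0"
      by (simp add: v0_def iota_def)
    have "in_strip K v0"
      using inner m_eq by (simp add: v0_def in_strip_def)
    then obtain x where x: "x \<in> set (butlast w)" and ox: "orbit_rep K n v0 = orbit_rep K n x"
      using ham unfolding ham_lift_def by blast
    have "iota x \<in> set (butlast u)"
      using x u_eq by (simp add: map_butlast[symmetric])
    moreover have "orbit_rep m n (iota x) = orbit_rep m n v"
      using ox v m_eq by (simp add: orbit_rep_iota)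
    ultimately show ?thesis
      using set_eq by (metis UnI1 image_eqI)
  qed
qed

theorem ham_lift_extended: "ham_lift m n c extended"
proof -
  have "2 \<le> length extended"
    using length_splice[of m n detour_at shift_at 0 0 u] length_u by (simp add: extended_def)
  moreover have "last extended = sigma_pow m n c (hd extended)"
    using last_u hd_extended by (subst extended_snoc) simp
  ultimately show ?thesis
    unfolding ham_lift_def
    using in_strip_extended successively_extended distinct_orbit_rep_extended orbit_rep_extended_covers
    by blast
qed

lemma extended_detour_start:
  assumes i: "i \<in> set I"
  shows "\<exists>pos s. even s \<and> Suc pos < length extended \<and>
           extended ! pos = sigma_pow m n s (detour n (u!i) (u!Suc i) (eps i) ! 0) \<and>
           extended ! Suc pos = sigma_pow m n s (detour n (u!i) (u!Suc i) (eps i) ! 1)"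
proof -
  have "i < length u" and "2 \<le> length (detour_at (0 + i))"
    using i side_steps detour_len_ge_2[OF n_pos] by (auto simp: detour_at_def length_detour)
  moreover have "\<And>t. even (shift_at t)"
    by (simp add: shift_at_def even_detour_shift)
  ultimately show ?thesis
    using splice_detour_start[of i u detour_at 0 0 shift_at m n] i
    unfolding extended_def by (simp add: detour_at_def)
qed

end

text \<open>By \<open>detour_first_step\<close>, the first step of the detour inserted at step \<open>i\<close> of \<open>u\<close>
  is inherited from step \<open>i\<close> in this sense; this makes the extended tour extendable again.\<close>
definition inherited_step :: "nat \<Rightarrow> vtx list \<Rightarrow> nat \<Rightarrow> vtx list \<Rightarrow> nat \<Rightarrow> bool" where
  "inherited_step m u i u' j \<longleftrightarrow> Suc j < length u' \<and>
     (left_step (u!i) (u!Suc i) \<longrightarrow> left_step (u'!j) (u'!Suc j)) \<and>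
     (right_step m (u!i) (u!Suc i) \<longrightarrow> right_step (m + 4) (u'!j) (u'!Suc j)) \<and>
     step_dir (u'!j) (u'!Suc j) = - step_dir (u!i) (u!Suc i) \<and>
     (even (snd (u'!j)) \<longleftrightarrow> odd (snd (u!i)))"

lemma (in detour_insertion) inherited_steps_extended:
  "\<exists>pos. (\<forall>i\<in>set I. inherited_step m u i (map iota extended) (pos i)) \<and> inj_on pos (set I)"
proof -
  have "\<forall>i\<in>set I. \<exists>pos s. even s \<and> Suc pos < length extended \<and>
      extended ! pos = sigma_pow m n s (detour n (u!i) (u!Suc i) (eps i) ! 0) \<and>
      extended ! Suc pos = sigma_pow m n s (detour n (u!i) (u!Suc i) (eps i) ! 1)"
    using extended_detour_start by blast
  from bchoice[OF this] obtain pos where start: "\<forall>i\<in>set I. \<exists>s. even s \<and> Suc (pos i) < length extended \<and>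
      extended ! pos i = sigma_pow m n s (detour n (u!i) (u!Suc i) (eps i) ! 0) \<and>
      extended ! Suc (pos i) = sigma_pow m n s (detour n (u!i) (u!Suc i) (eps i) ! 1)"
    by blast
  have "inherited_step m u i (map iota extended) (pos i)" if i: "i \<in> set I" for i
  proof -
    obtain s where s: "even s" and len: "Suc (pos i) < length extended"
      and p: "extended ! pos i = sigma_pow m n s (detour n (u!i) (u!Suc i) (eps i) ! 0)"
      and q: "extended ! Suc (pos i) = sigma_pow m n s (detour n (u!i) (u!Suc i) (eps i) ! 1)"
      using start i by blast
    have "map iota extended ! pos i = iota (sigma_pow m n s (detour n (u!i) (u!Suc i) (eps i) ! 0))"
      and "map iota extended ! Suc (pos i) = iota (sigma_pow m n s (detour n (u!i) (u!Suc i) (eps i) ! 1))"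
      using len p q by simp_all
    then show ?thesis
      using detour_first_step[OF n_pos m_ge side_step[OF i] sign[OF i] s refl refl] len
      unfolding inherited_step_def by simp
  qed
  moreover have "inj_on pos (set I)"
  proof (rule inj_onI)
    fix i j assume i: "i \<in> set I" and j: "j \<in> set I" and eq: "pos i = pos j"
    define a where "a = detour n (u!i) (u!Suc i) (eps i) ! 0"
    define b where "b = detour n (u!j) (u!Suc j) (eps j) ! 0"
    have "0 < detour_len n"
      using detour_len_ge_2[OF n_pos] by simp
    then have a: "a \<in> set (detour n (u!i) (u!Suc i) (eps i))"
      and b: "b \<in> set (detour n (u!j) (u!Suc j) (eps j))"
      by (simp_all add: a_def b_def length_detour)
    obtain s s' where "extended ! pos i = sigma_pow m n s a" and "extended ! pos j = sigma_pow m n s' b"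
      using start i j unfolding a_def b_def by blast
    then have "orbit_rep m n (sigma_pow m n s a) = orbit_rep m n (sigma_pow m n s' b)"
      using eq by simp
    then have "orbit_rep m n a = orbit_rep m n b"
      by (simp add: orbit_rep_sigma_pow[OF n_pos])
    then have "detour_class m n (u!i) (u!Suc i) (eps i) = detour_class m n (u!j) (u!Suc j) (eps j)"
      by (rule detour_class_eq_if_orbit_rep_eq[OF n_pos m_ge side_step[OF i] side_step[OF j] a b])
    then show "i = j"
      using signs i j unfolding detour_signs_def by blast
  qed
  ultimately show ?thesis by blast
qed

section \<open>Extending configurations of steps\<close>

definition left_even_or_right_odd :: "nat \<Rightarrow> vtx list \<Rightarrow> nat \<Rightarrow> bool" where
  "left_even_or_right_odd m u i \<longleftrightarrow>
     (left_step (u!i) (u!Suc i) \<and> even (snd (u!i))) \<or> (right_step m (u!i) (u!Suc i) \<and> odd (snd (u!i)))"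

definition left_odd_or_right_even :: "nat \<Rightarrow> vtx list \<Rightarrow> nat \<Rightarrow> bool" where
  "left_odd_or_right_even m u i \<longleftrightarrow>
     (left_step (u!i) (u!Suc i) \<and> odd (snd (u!i))) \<or> (right_step m (u!i) (u!Suc i) \<and> even (snd (u!i)))"

text \<open>The steps of the walk \<open>u\<close> with indices in \<open>I\<close> form an extending collection of edges;
  the step directions summing to zero means that half of them go up and half down.\<close>
definition extending_at :: "nat \<Rightarrow> nat \<Rightarrow> vtx list \<Rightarrow> nat list \<Rightarrow> bool" where
  "extending_at m n u I \<longleftrightarrow> distinct I \<and>
     (\<forall>i\<in>set I. Suc i < length u \<and> (left_step (u!i) (u!Suc i) \<or> right_step m (u!i) (u!Suc i))) \<and>
     sum_list (map (\<lambda>i. step_dir (u!i) (u!Suc i)) I) = 0 \<and>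
     (if even n then (\<exists>a b c d. I = [a, b, c, d] \<and> even (snd (u!a)) \<and> even (snd (u!b)) \<and>
                                odd (snd (u!c)) \<and> odd (snd (u!d)))
      else (\<exists>a b. I = [a, b] \<and> left_even_or_right_odd m u a \<and> left_odd_or_right_even m u b))"

text \<open>For even \<open>n\<close>, a step from an even row yields detours of the odd classes 1 and 3 and
  one from an odd row those of the even classes 0 and 2; flipping the sign of a detour moves
  it to the other class of the same parity.\<close>
lemma detour_signs_exist_even:
  assumes n: "1 \<le> n" and ev: "even n" and ext: "extending_at m n u I"
  shows "\<exists>eps. detour_signs m n u I eps"
proof -
  obtain a b c d where I: "I = [a, b, c, d]" and pa: "even (snd (u!a))" and pb: "even (snd (u!b))"
    and pc: "odd (snd (u!c))" and pd: "odd (snd (u!d))"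
    using ext ev unfolding extending_at_def by auto
  have dabcd: "a \<noteq> b" "a \<noteq> c" "a \<noteq> d" "b \<noteq> c" "b \<noteq> d" "c \<noteq> d"
    using ext I by (auto simp: extending_at_def)
  define cl where "cl i e = detour_class m n (u!i) (u!Suc i) e" for i e
  define eps :: "nat \<Rightarrow> int" where
    "eps i = (if i = b then (if cl a 1 = cl b 1 then -1 else 1)
              else if i = d then (if cl c 1 = cl d 1 then -1 else 1) else 1)" for i
  have signs: "eps i = 1 \<or> eps i = -1" for i
    by (simp add: eps_def)
  have ea: "eps a = 1" and ec: "eps c = 1"
    using dabcd by (auto simp: eps_def)
  have class_range: "0 \<le> cl i e \<and> cl i e < 4" for i e
    unfolding cl_def using detour_class_range[OF ev] .
  have parity: "cl i (eps i) mod 2 = (snd (u!i) + 1) mod 2" for i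
    unfolding cl_def using detour_class_parity[OF ev signs] .
  have odd_class: "cl i (eps i) = 1 \<or> cl i (eps i) = 3" if "even (snd (u!i))" for i
    using parity[of i] class_range[of i "eps i"] that by presburger
  have even_class: "cl i (eps i) = 0 \<or> cl i (eps i) = 2" if "odd (snd (u!i))" for i
    using parity[of i] class_range[of i "eps i"] that by presburger
  have flip: "cl i (-1) = (cl i 1 + 2) mod 4" for i
    unfolding cl_def using detour_class_sign_flip[OF ev] .
  have "cl a (eps a) \<noteq> cl b (eps b)"
    using odd_class[OF pa] ea flip[of b] dabcd by (auto simp: eps_def)
  moreover have "cl c (eps c) \<noteq> cl d (eps d)"
    using even_class[OF pc] ec flip[of d] dabcd by (auto simp: eps_def)
  ultimately have classes: "{cl a (eps a), cl b (eps b)} = {1, 3}" "{cl c (eps c), cl d (eps d)} = {0, 2}"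
    using odd_class[OF pa] odd_class[OF pb] even_class[OF pc] even_class[OF pd] by auto
  have "\<exists>i\<in>set I. band_class m n v = cl i (eps i)" for v
  proof -
    have "0 \<le> band_class m n v \<and> band_class m n v < 4"
      using ev by (simp add: band_class_def)
    then have "band_class m n v \<in> {1, 3} \<union> {0, 2}"
      by auto
    then show ?thesis
      unfolding classes[symmetric] I by auto
  qed
  moreover have "\<forall>i\<in>set I. \<forall>j\<in>set I. cl i (eps i) = cl j (eps j) \<longrightarrow> i = j"
    using classes dabcd unfolding I by (auto simp: doubleton_eq_iff)
  ultimately have "detour_signs m n u I eps"
    using signs unfolding detour_signs_def cl_def by blast
  then show ?thesis by blast
qed

lemma detour_signs_exist_odd:
  assumes od: "odd n" and m: "7 \<le> m" and ext: "extending_at m n u I"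
  shows "detour_signs m n u I (\<lambda>_. 1)"
proof -
  obtain a b where I: "I = [a, b]" and ta: "left_even_or_right_odd m u a"
    and tb: "left_odd_or_right_even m u b"
    using ext od unfolding extending_at_def by auto
  have class_one: "detour_class m n (u!i) (u!Suc i) 1
      = (if left_step (u!i) (u!Suc i) then (snd (u!i) + 1) mod 2 else snd (u!i) mod 2)" for i
    using detour_class_odd[OF od] by simp
  have ca: "detour_class m n (u!a) (u!Suc a) 1 = 1"
    using ta right_stepD(5)[OF _ m] unfolding class_one left_even_or_right_odd_def by presburger
  have cb: "detour_class m n (u!b) (u!Suc b) 1 = 0"
    using tb right_stepD(5)[OF _ m] unfolding class_one left_odd_or_right_even_def by presburger
  have "\<exists>i\<in>set I. band_class m n v = detour_class m n (u!i) (u!Suc i) 1" for v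
  proof -
    have "0 \<le> band_class m n v \<and> band_class m n v < 2"
      using od by (simp add: band_class_def)
    then have "band_class m n v = 0 \<or> band_class m n v = 1"
      by linarith
    then show ?thesis
      using ca cb unfolding I by auto
  qed
  moreover have "\<forall>i\<in>set I. \<forall>j\<in>set I. detour_class m n (u!i) (u!Suc i) 1
      = detour_class m n (u!j) (u!Suc j) 1 \<longrightarrow> i = j"
    using ca cb unfolding I by auto
  ultimately show ?thesis
    unfolding detour_signs_def by simp
qed

lemma extending_at_inherited:
  assumes ext: "extending_at m n u I"
    and inh: "\<forall>i\<in>set I. inherited_step m u i u' (pos i)" and inj: "inj_on pos (set I)"
  shows "\<exists>I'. extending_at (m + 4) n u' I'"
proof -
  have I: "distinct I" "sum_list (map (\<lambda>i. step_dir (u!i) (u!Suc i)) I) = 0"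
    using ext by (simp_all add: extending_at_def)
  have dirs: "step_dir (u'!pos i) (u'!Suc (pos i)) = - step_dir (u!i) (u!Suc i)" if "i \<in> set I" for i
    using inh that by (simp add: inherited_step_def)
  have rows: "even (snd (u'!pos i)) \<longleftrightarrow> odd (snd (u!i))" if "i \<in> set I" for i
    using inh that by (simp add: inherited_step_def)
  have common: "distinct (map pos J) \<and>
      (\<forall>j\<in>set (map pos J). Suc j < length u' \<and> (left_step (u'!j) (u'!Suc j) \<or> right_step (m + 4) (u'!j) (u'!Suc j))) \<and>
      sum_list (map (\<lambda>j. step_dir (u'!j) (u'!Suc j)) (map pos J)) = 0"
    if J: "distinct J" "set J = set I" for J
  proof (intro conjI)
    show "distinct (map pos J)"
      using J inj by (simp add: distinct_map)
    show "\<forall>j\<in>set (map pos J). Suc j < length u' \<and> (left_step (u'!j) (u'!Suc j) \<or> right_step (m + 4) (u'!j) (u'!Suc j))"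
      using J ext inh unfolding extending_at_def inherited_step_def by auto
    have "sum_list (map (\<lambda>j. step_dir (u'!j) (u'!Suc j)) (map pos J))
        = (\<Sum>i\<in>set I. - step_dir (u!i) (u!Suc i))"
      using J dirs by (simp add: sum_list_distinct_conv_sum_set)
    also have "\<dots> = - sum_list (map (\<lambda>i. step_dir (u!i) (u!Suc i)) I)"
      using I by (simp add: sum_list_distinct_conv_sum_set sum_negf)
    finally show "sum_list (map (\<lambda>j. step_dir (u'!j) (u'!Suc j)) (map pos J)) = 0"
      using I by simp
  qed
  show ?thesis
  proof (cases "even n")
    case True
    then obtain a b c d where abcd: "I = [a, b, c, d]" and "even (snd (u!a))" "even (snd (u!b))"
      "odd (snd (u!c))" "odd (snd (u!d))"
      using ext by (auto simp: extending_at_def)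
    moreover have "distinct [c, d, a, b]" and "set [c, d, a, b] = set I"
      using I abcd by auto
    ultimately have "extending_at (m + 4) n u' (map pos [c, d, a, b])"
      using True common[of "[c, d, a, b]"] rows unfolding extending_at_def by simp
    then show ?thesis by blast
  next
    case False
    then obtain a b where ab: "I = [a, b]" and ta: "left_even_or_right_odd m u a"
      and tb: "left_odd_or_right_even m u b"
      using ext by (auto simp: extending_at_def)
    have "left_even_or_right_odd (m + 4) u' (pos b)" "left_odd_or_right_even (m + 4) u' (pos a)"
      using inh ta tb unfolding ab left_even_or_right_odd_def left_odd_or_right_even_def inherited_step_def
      by auto
    moreover have "distinct [b, a]" and "set [b, a] = set I"
      using I ab by auto
    ultimately have "extending_at (m + 4) n u' (map pos [b, a])"
      using False common[of "[b, a]"] unfolding extending_at_def by simp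
    then show ?thesis by blast
  qed
qed

lemma extending_at_step:
  assumes n: "1 \<le> n" and K: "3 \<le> K" and ham: "ham_lift K n c w"
    and ext: "extending_at (K + 4) n (map iota w) I"
  shows "\<exists>w' I'. ham_lift (K + 4) n c w' \<and> extending_at (K + 8) n (map iota w') I'"
proof -
  obtain eps where signs: "detour_signs (K + 4) n (map iota w) I eps"
  proof (cases "even n")
    case True
    then show ?thesis
      using detour_signs_exist_even[OF n True ext] that by blast
  next
    case False
    then show ?thesis
      using detour_signs_exist_odd[OF False _ ext] K that by simp
  qed
  have distinct: "distinct I"
    and sides: "\<forall>i\<in>set I. Suc i < length (map iota w) \<and>
      (left_step (map iota w ! i) (map iota w ! Suc i) \<or> right_step (K + 4) (map iota w ! i) (map iota w ! Suc i))"
    and balanced: "sum_list (map (\<lambda>i. step_dir (map iota w ! i) (map iota w ! Suc i)) I) = 0"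
    using ext unfolding extending_at_def by blast+
  interpret detour_insertion n K "K + 4" c w "map iota w" I eps
    by (unfold_locales; (rule refl n K ham distinct sides signs balanced)?)
  obtain pos where "\<forall>i\<in>set I. inherited_step (K + 4) (map iota w) i (map iota extended) (pos i)"
    and "inj_on pos (set I)"
    using inherited_steps_extended by blast
  then obtain I' where "extending_at (K + 4 + 4) n (map iota extended) I'"
    using extending_at_inherited[OF ext] by blast
  then show ?thesis
    using ham_lift_extended by (auto simp: add.assoc)
qed

section \<open>From extendable tours to extending configurations\<close>

lemma ham_lift_length_butlast_ge_3:
  assumes n: "1 \<le> n" and K: "3 \<le> K" and ham: "ham_lift K n c w"
  shows "3 \<le> length (butlast w)"
proof -
  have "orbit_rep K n (a, 0) \<in> orbit_rep K n ` set (butlast w)" if "0 \<le> a" "a \<le> 2" for a :: int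
    using ham K that unfolding ham_lift_def in_strip_def by auto
  moreover have "orbit_rep K n (a, 0) = (a, 0)" for a
    by (simp add: orbit_rep_def)
  ultimately have "{(0, 0), (1, 0), (2, 0)} \<subseteq> orbit_rep K n ` set (butlast w)"
    by (metis empty_subsetI insert_subset le_numeral_extra(1) order_refl zero_le_numeral
        zero_le_one one_le_numeral)
  then have "card {(0::int, 0::int), (1, 0), (2, 0)} \<le> card (orbit_rep K n ` set (butlast w))"
    by (intro card_mono) auto
  moreover have "card (orbit_rep K n ` set (butlast w)) = length (butlast w)"
    using ham by (metis ham_lift_def distinct_card length_map list.set_map)
  ultimately show ?thesis
    by simp
qed

lemma ham_lift_step_unique:
  assumes n: "1 \<le> n" and K: "3 \<le> K" and ham: "ham_lift K n c w"
    and i: "Suc i < length w" and j: "Suc j < length w"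
    and e: "{w!i, w!Suc i} = {w!j, w!Suc j}"
  shows "i = j"
proof -
  define N where "N = length w - 1"
  have N: "3 \<le> N"
    using ham_lift_length_butlast_ge_3[OF n K ham] by (simp add: N_def)
  have inj: "a = b" if "a < N" "b < N" "orbit_rep K n (w!a) = orbit_rep K n (w!b)" for a b
  proof -
    have "distinct (map (orbit_rep K n) (butlast w))"
      using ham by (simp add: ham_lift_def)
    then show ?thesis
      using that by (simp add: N_def distinct_conv_nth nth_butlast) (metis length_butlast nth_butlast)
  qed
  have wrap: "orbit_rep K n (w!k) = orbit_rep K n (w!(k mod N))" if "k \<le> N" for k
  proof (cases "k = N")
    case True
    have "w \<noteq> []"
      using i by auto
    then have "w!k = sigma_pow K n c (w!0)"
      using ham True by (simp add: ham_lift_def N_def last_conv_nth hd_conv_nth)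
    then show ?thesis
      using True orbit_rep_sigma_pow[OF n] by simp
  qed (use that in simp)
  from e consider "w!i = w!j" | "w!i = w!Suc j" "w!Suc i = w!j"
    by (auto simp: doubleton_eq_iff)
  then show ?thesis
  proof cases
    case 1
    then show ?thesis
      using inj i j by (simp add: N_def)
  next
    case 2
    have "i = Suc j mod N"
      using inj[of i "Suc j mod N"] wrap[of "Suc j"] 2 i j N by (simp add: N_def)
    moreover have "j = Suc i mod N"
      using inj[of j "Suc i mod N"] wrap[of "Suc i"] 2 i j N by (simp add: N_def)
    ultimately show ?thesis
      using i j N by (auto simp: mod_Suc N_def split: if_splits)
  qed
qed

lemma traverses_up_iff_step_dir:
  assumes n: "1 \<le> n" and K: "3 \<le> K" and ham: "ham_lift K n c w" and u: "u = map iota w"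
    and i: "Suc i < length u"
  shows "traverses_up u {u!i, u!Suc i} \<longleftrightarrow> step_dir (u!i) (u!Suc i) = -1"
proof
  assume "traverses_up u {u!i, u!Suc i}"
  then obtain j where j: "Suc j < length u" "{u!i, u!Suc i} = {u!j, u!Suc j}" "snd (u!j) < snd (u!Suc j)"
    unfolding traverses_up_def by blast
  have "iota ` {w!i, w!Suc i} = iota ` {w!j, w!Suc j}"
    using j(2) i j(1) u by simp
  then have "{w!i, w!Suc i} = {w!j, w!Suc j}"
    using inj_iota by (metis inj_image_eq_iff)
  then have "i = j"
    using ham_lift_step_unique[OF n K ham] i j(1) u by simp
  then show "step_dir (u!i) (u!Suc i) = -1"
    using j(3) by (simp add: step_dir_def)
next
  assume "step_dir (u!i) (u!Suc i) = -1"
  then have "snd (u!i) < snd (u!Suc i)"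
    by (simp add: step_dir_def split: if_splits)
  then show "traverses_up u {u!i, u!Suc i}"
    unfolding traverses_up_def using i by blast
qed

lemma left_step_if_left_edge: "left_edge {p, q} \<Longrightarrow> left_step p q"
  unfolding left_edge_def left_step_def by (auto simp: doubleton_eq_iff abs_minus_commute)

lemma right_step_if_right_edge: "right_edge m {p, q} \<Longrightarrow> right_step m p q"
  unfolding right_edge_def right_step_def by (auto simp: doubleton_eq_iff abs_minus_commute)

lemma sum_list_map_sign:
  "sum_list (map (\<lambda>x. if P x then -1 else 1) xs) = int (length xs) - 2 * int (length (filter P xs))"
  by (induction xs) auto

lemma extending_edge_list:
  assumes ext: "extending m n C"
  obtains es where "distinct es" and "set es = C"
    and "if even n then \<exists>e1 e2 e3 e4. es = [e1, e2, e3, e4] \<and>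
            even_edge e1 \<and> even_edge e2 \<and> odd_edge e3 \<and> odd_edge e4
         else \<exists>e1 e2. es = [e1, e2] \<and>
            ((left_edge e1 \<and> even_edge e1) \<or> (right_edge m e1 \<and> odd_edge e1)) \<and>
            ((left_edge e2 \<and> odd_edge e2) \<or> (right_edge m e2 \<and> even_edge e2))"
proof (cases "even n")
  case True
  have fin: "finite C" and card: "card C = 4"
    and card_even: "card {e \<in> C. even_edge e} = 2" and card_odd: "card {e \<in> C. odd_edge e} = 2"
    using ext True by (simp_all add: extending_def)
  obtain e1 e2 where ev: "{e \<in> C. even_edge e} = {e1, e2}" "e1 \<noteq> e2"
    using card_even card_2_iff by metis
  obtain e3 e4 where od: "{e \<in> C. odd_edge e} = {e3, e4}" "e3 \<noteq> e4"
    using card_odd card_2_iff by metis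
  have not_both: "\<not> (even_edge e \<and> odd_edge e)" if "e \<in> C" for e
  proof -
    have "left_edge e \<or> right_edge m e"
      using ext that by (simp add: extending_def)
    then have "e \<noteq> {}"
      by (auto simp: left_edge_def right_edge_def)
    then show ?thesis
      by (auto simp: even_edge_def odd_edge_def)
  qed
  have in_C: "e1 \<in> C" "e2 \<in> C" "e3 \<in> C" "e4 \<in> C"
    and kinds: "even_edge e1" "even_edge e2" "odd_edge e3" "odd_edge e4"
    using ev(1) od(1) by blast+
  have dist: "distinct [e1, e2, e3, e4]"
    using ev(2) od(2) not_both in_C kinds by auto
  have "set [e1, e2, e3, e4] = C"
  proof (rule card_subset_eq[OF fin])
    show "set [e1, e2, e3, e4] \<subseteq> C"
      using in_C by simp
    show "card (set [e1, e2, e3, e4]) = card C"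
      using dist card by (simp only: distinct_card) simp
  qed
  with dist show ?thesis
    by (rule that) (use True kinds in simp)
next
  case False
  then have "\<exists>e1 e2. C = {e1, e2} \<and> e1 \<noteq> e2 \<and>
      ((left_edge e1 \<and> even_edge e1) \<or> (right_edge m e1 \<and> odd_edge e1)) \<and>
      ((left_edge e2 \<and> odd_edge e2) \<or> (right_edge m e2 \<and> even_edge e2))"
    using ext by (simp add: extending_def)
  then obtain e1 e2 where "C = {e1, e2}" "e1 \<noteq> e2"
    "(left_edge e1 \<and> even_edge e1) \<or> (right_edge m e1 \<and> odd_edge e1)"
    "(left_edge e2 \<and> odd_edge e2) \<or> (right_edge m e2 \<and> even_edge e2)"
    by blast
  then show ?thesis
    using that[of "[e1, e2]"] False by simp
qed

lemma sum_step_dir_eq_0_if_half_up: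
  assumes es: "distinct es" "set es = C" and len: "even (length es)"
    and dir: "\<forall>e\<in>C. step_dir (u!ix e) (u!Suc (ix e)) = (if up e then -1 else 1)"
    and half_up: "card {e \<in> C. up e} = card C div 2"
  shows "sum_list (map (\<lambda>i. step_dir (u!i) (u!Suc i)) (map ix es)) = 0"
proof -
  have "map (\<lambda>i. step_dir (u!i) (u!Suc i)) (map ix es) = map (\<lambda>e. if up e then -1 else 1) es"
    unfolding map_map comp_def using es dir by (intro map_cong) auto
  then have "sum_list (map (\<lambda>i. step_dir (u!i) (u!Suc i)) (map ix es))
      = sum_list (map (\<lambda>e. if up e then -1 else 1) es)"
    by (simp only:)
  also have "\<dots> = int (length es) - 2 * int (card {e \<in> C. up e})"
    using es by (simp add: sum_list_map_sign distinct_length_filter Int_def conj_commute)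
  also have "card {e \<in> C. up e} = length es div 2"
    using half_up es by (simp add: distinct_card[symmetric])
  finally show ?thesis
    using len by auto
qed

lemma extending_at_if_traversed:
  assumes ext: "extending m n C"
    and ix: "\<forall>e\<in>C. Suc (ix e) < length u \<and> e = {u!ix e, u!Suc (ix e)}"
    and dir: "\<forall>e\<in>C. step_dir (u!ix e) (u!Suc (ix e)) = (if traverses_up u e then -1 else 1)"
    and half_up: "card {e \<in> C. traverses_up u e} = card C div 2"
  shows "\<exists>I. extending_at m n u I"
proof -
  have at: "Suc (ix e) < length u" "e = {u!ix e, u!Suc (ix e)}" if "e \<in> C" for e
    using ix that by blast+
  have even_at: "even (snd (u!ix e))" if "e \<in> C" "even_edge e" for e
    using that at(2)[OF that(1)] unfolding even_edge_def by blast
  have odd_at: "odd (snd (u!ix e))" if "e \<in> C" "odd_edge e" for e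
    using that at(2)[OF that(1)] unfolding odd_edge_def by blast
  have left_at: "left_step (u!ix e) (u!Suc (ix e))" if "e \<in> C" "left_edge e" for e
    using left_step_if_left_edge that at(2)[OF that(1)] by metis
  have right_at: "right_step m (u!ix e) (u!Suc (ix e))" if "e \<in> C" "right_edge m e" for e
    using right_step_if_right_edge that at(2)[OF that(1)] by metis
  obtain es where es: "distinct es" "set es = C" and pattern: "if even n then
        \<exists>e1 e2 e3 e4. es = [e1, e2, e3, e4] \<and> even_edge e1 \<and> even_edge e2 \<and> odd_edge e3 \<and> odd_edge e4
      else \<exists>e1 e2. es = [e1, e2] \<and>
        ((left_edge e1 \<and> even_edge e1) \<or> (right_edge m e1 \<and> odd_edge e1)) \<and>
        ((left_edge e2 \<and> odd_edge e2) \<or> (right_edge m e2 \<and> even_edge e2))"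
    using extending_edge_list[OF ext] by blast
  have "inj_on ix C"
    using at by (metis inj_onI)
  then have "distinct (map ix es)"
    using es by (simp add: distinct_map)
  moreover have "\<forall>i\<in>set (map ix es). Suc i < length u \<and> (left_step (u!i) (u!Suc i) \<or> right_step m (u!i) (u!Suc i))"
    using es at left_at right_at ext unfolding extending_def by auto
  moreover have "even (length es)"
    using pattern by (auto split: if_splits)
  then have "sum_list (map (\<lambda>i. step_dir (u!i) (u!Suc i)) (map ix es)) = 0"
    using sum_step_dir_eq_0_if_half_up[OF es _ dir half_up] by blast
  moreover have "if even n then (\<exists>a b c d. map ix es = [a, b, c, d] \<and> even (snd (u!a)) \<and> even (snd (u!b)) \<and>
                                odd (snd (u!c)) \<and> odd (snd (u!d)))
      else (\<exists>a b. map ix es = [a, b] \<and> left_even_or_right_odd m u a \<and> left_odd_or_right_even m u b)"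
  proof (cases "even n")
    case True
    then obtain e1 e2 e3 e4 where "es = [e1, e2, e3, e4]" "even_edge e1" "even_edge e2" "odd_edge e3" "odd_edge e4"
      using pattern by auto
    then show ?thesis
      using True es even_at odd_at by auto
  next
    case False
    then obtain e1 e2 where e12: "es = [e1, e2]"
      "(left_edge e1 \<and> even_edge e1) \<or> (right_edge m e1 \<and> odd_edge e1)"
      "(left_edge e2 \<and> odd_edge e2) \<or> (right_edge m e2 \<and> even_edge e2)"
      using pattern by auto
    then have "e1 \<in> C" "e2 \<in> C"
      using es by auto
    then have "left_even_or_right_odd m u (ix e1)" "left_odd_or_right_even m u (ix e2)"
      using e12 even_at odd_at left_at right_at
      unfolding left_even_or_right_odd_def left_odd_or_right_even_def by blast+
    then show ?thesis
      using False e12 by simp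
  qed
  ultimately have "extending_at m n u (map ix es)"
    unfolding extending_at_def by blast
  then show ?thesis
    by blast
qed

lemma extendable_imp_extending_at:
  assumes n: "1 \<le> n" and m: "7 \<le> m" and ex: "extendable m n w"
  shows "\<exists>c I. ham_lift (m - 4) n c w \<and> extending_at m n (map iota w) I"
proof -
  define u where "u = map iota w"
  have K: "3 \<le> m - 4"
    using m by simp
  obtain c where ham: "ham_lift (m - 4) n c w"
    using ex tour_lift_iff_ham_lift[OF n] by (auto simp: extendable_def)
  obtain C where ext: "extending m n C" and traversed: "\<forall>e\<in>C. traverses u e"
    and half_up: "card {e \<in> C. traverses_up u e} = card C div 2"
    using ex unfolding extendable_def u_def by blast
  have "\<forall>e\<in>C. \<exists>i. Suc i < length u \<and> e = {u!i, u!Suc i}"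
    using traversed unfolding traverses_def by blast
  from bchoice[OF this] obtain ix where ix: "\<forall>e\<in>C. Suc (ix e) < length u \<and> e = {u!ix e, u!Suc (ix e)}"
    by blast
  have "step_dir (u!ix e) (u!Suc (ix e)) = (if traverses_up u e then -1 else 1)" if "e \<in> C" for e
  proof -
    have "e = {u!ix e, u!Suc (ix e)}" and "traverses_up u {u!ix e, u!Suc (ix e)} \<longleftrightarrow> step_dir (u!ix e) (u!Suc (ix e)) = -1"
      using traverses_up_iff_step_dir[OF n K ham u_def] ix that by blast+
    then show ?thesis
      using step_dir_cases[of "u!ix e" "u!Suc (ix e)"] by auto
  qed
  then show ?thesis
    using extending_at_if_traversed[OF ext ix _ half_up] ham u_def by blast
qed

lemma extending_at_iterate:
  assumes n: "1 \<le> n" and K: "3 \<le> K" and ham: "ham_lift K n c w"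
    and ext: "extending_at (K + 4) n (map iota w) I"
  shows "\<exists>w' I'. ham_lift (K + 4 * k) n c w' \<and> extending_at (K + 4 * k + 4) n (map iota w') I'"
proof (induction k)
  case 0
  then show ?case
    using ham ext by auto
next
  case (Suc k)
  then obtain w' I' where "ham_lift (K + 4 * k) n c w'" and "extending_at (K + 4 * k + 4) n (map iota w') I'"
    by blast
  then have "\<exists>w'' I''. ham_lift (K + 4 * k + 4) n c w'' \<and> extending_at (K + 4 * k + 8) n (map iota w'') I''"
    using extending_at_step[OF n] K by simp
  then show ?case
    by (simp add: algebra_simps)
qed

theorem corollary3p12:
  fixes m n :: nat and w :: "vtx list"
  assumes "7 \<le> m" and "1 \<le> n"
    and "tour_lift (m - 4) n w"
    and "extendable m n w"
  shows "(nullhomotopic (m - 4) n w \<longrightarrow>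
            (\<forall>k::nat. \<exists>w'. tour_lift (m + 4 * k) n w' \<and> nullhomotopic (m + 4 * k) n w'))
       \<and> (generating (m - 4) n w \<longrightarrow>
            (\<forall>k::nat. \<exists>w'. tour_lift (m + 4 * k) n w' \<and> generating (m + 4 * k) n w'))"
proof -
  have K: "3 \<le> m - 4" and width: "m - 4 + 4 * Suc k = m + 4 * k" for k
    using assms(1) by simp_all
  obtain c I where ham: "ham_lift (m - 4) n c w" and ext: "extending_at (m - 4 + 4) n (map iota w) I"
    using extendable_imp_extending_at[OF assms(2,1,4)] assms(1) by auto
  have hd: "hd w = (0, 0)"
    using tour_lift_iff_ham_lift[OF assms(2)] assms(3) by blast
  have tours: "\<exists>w'. tour_lift (m + 4 * k) n w' \<and> last w' = sigma_pow (m + 4 * k) n c' (0, 0)"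
    if "last w = sigma_pow (m - 4) n c' (0, 0)" for c' k
  proof -
    have "ham_lift (m - 4) n c' w"
      using ham that hd by (simp add: ham_lift_def)
    then obtain w' where "ham_lift (m + 4 * k) n c' w'"
      using extending_at_iterate[OF assms(2) K _ ext, of _ "Suc k"] width by auto
    moreover have "1 \<le> m + 4 * k"
      using assms(1) by simp
    ultimately show ?thesis
      using tour_lift_of_ham_lift[OF assms(2)] by blast
  qed
  show ?thesis
  proof (intro conjI impI allI)
    fix k assume "nullhomotopic (m - 4) n w"
    then show "\<exists>w'. tour_lift (m + 4 * k) n w' \<and> nullhomotopic (m + 4 * k) n w'"
      using tours[of 0 k] by (simp add: nullhomotopic_def)
  next
    fix k assume "generating (m - 4) n w"
    then have "last w = sigma_pow (m - 4) n 1 (0, 0) \<or> last w = sigma_pow (m - 4) n (-1) (0, 0)"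
      by (auto simp: generating_def sigma_pow_def)
    then show "\<exists>w'. tour_lift (m + 4 * k) n w' \<and> generating (m + 4 * k) n w'"
      using tours[of 1 k] tours[of "-1" k] by (auto simp: generating_def sigma_pow_def)
  qed
qed

end
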